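(* Let $F:\mathbb{R}^{n_0}\to\mathbb{R}$ be a generic, supertransversal fully-connected ReLU network with at least $n_0$ hidden units in the first layer, and let $\mathcal{S}(F)=\{Q_{s(C)}:C\in\mathcal{C}(F)\}$ be its sign sequence cubical complex. Then the map $C\mapsto Q_{s(C)}$ is an isomorphism from the face poset of $\mathcal{C}(F)$ to the opposite of the face poset of $\mathcal{S}(F)$, and the mod-two cellular boundary map of $\mathcal{S}(F)$ is dual (transpose) to the mod-two cellular boundary map of $\mathcal{C}(F)$: a cell $C$ is a codimension-one face of a cell $D$ in $\mathcal{C}(F)$ if and only if $s(D)$ is obtained from $s(C)$ by replacing exactly one zero entry with $1$ or $-1$, i.e. iff $Q_{s(D)}$ is a codimension-one face of $Q_{s(C)}$.
   Context: A ReLU network of architecture $(n_0,\dots,n_m,1)$: affine maps $A_i:\mathbb{R}^{n_{i-1}}\to\mathbb{R}^{n_i}$, $1\le i\le m+1$, $n_{m+1}=1$; $F_i=\mathrm{ReLU}\circ A_i$ ($i\le m$), $G=A_{m+1}$, $F=G\circ F_m\circ\cdots\circ F_1$, $F_{(k)}=F_k\circ\cdots\circ F_1$ ($F_{(0)}=\mathrm{id}$), $F^{(k)}=G\circ F_m\circ\cdots\circ F_k$ ($F^{(m+1)}=G$). Node maps $F_{ij}=\pi_j\circ A_i\circ F_{(i-1)}$, $1\le i\le m+1$, $1\le j\le n_i$; $N=n_1+\dots+n_m+1$. Polyhedra are finite intersections of closed half-spaces; $C^\circ$ is the relative interior. $R^{(i)}$ is the polyhedral complex on $\mathbb{R}^{n_{i-1}}$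 induced by the hyperplanes $H_{ij}=\{\pi_jA_i=0\}$ (cells: nonempty intersections of one choice among $\{\pi_jA_i\ge0\},\{\pi_jA_i\le0\},\{\pi_jA_i=0\}$ for each $j$). Canonical polyhedral complex: $\mathcal{C}(F_{(1)})=R^{(1)}$, $\mathcal{C}(F_{(k)})=\{C\cap F_{(k-1)}^{-1}(R)\neq\emptyset: C\in\mathcal{C}(F_{(k-1)}),R\in R^{(k)}\}$, $2\le k\le m+1$; $\mathcal{C}(F)$ is the last; likewise $\mathcal{C}(F^{(k)})$ on $\mathbb{R}^{n_{k-1}}$, $\mathcal{C}(F^{(m+1)})=R^{(m+1)}$. Sign sequence: $s(C)\in\{-1,0,1\}^N$, $s_{ij}(C)=\mathrm{sgn}(F_{ij}(x))$, $x\in C^\circ$. For $\sigma\in\{-1,0,1\}^N$, $Q_\sigma=\{x\in[-1,1]^N:x_l=\sigma_l\text{ whenever }\sigma_l\ne0\}$ is the corresponding closed face of the cube $[-1,1]^N$ (product CW structure), of dimension the number of zeros of $\sigma$; $\mathcal{S}(F)$ is a subcomplex of this cube. Generic: for every $i$, any $k$ of the hyperplanes $H_{i1},\dots,H_{in_i}$ meet in an affine subspace of dimension $n_{i-1}-k$ (empty if $k>n_{i-1}$). Supertransversal: for every $1\le i\le m$, the restriction of $F_i$ to the relative interior of each cell of $R^{(i)}$ is transverse to the relative interior of every cell of $\mathcal{C}(F^{(i+1)})$. *)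

theory Defs
  imports "HOL-Analysis.Analysis" "HOL-Library.Function_Algebras"
begin

text \<open>R^n is represented by functions nat => real vanishing outside the
  coordinates 0..n-1 (the set vec n).  We give functions the pointwise
  real vector space structure; together with the product topology from
  HOL-Analysis this makes span, dim, affine hull and rel_interior available.\<close>

instantiation "fun" :: (type, real_vector) real_vector
begin
definition scaleR_fun :: "real \<Rightarrow> ('a \<Rightarrow> 'b) \<Rightarrow> 'a \<Rightarrow> 'b" where
  "scaleR_fun c f = (\<lambda>x. c *\<^sub>R f x)"
instance
  by standard (auto simp: scaleR_fun_def fun_eq_iff scaleR_add_right scaleR_add_left)
end

definition vec :: "nat \<Rightarrow> (nat \<Rightarrow> real) set" where
  "vec n = {x. \<forall>j\<ge>n. x j = 0}"

definition adim :: "('a::real_vector) set \<Rightarrow> nat" where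
  "adim S = dim {x - y | x y. x \<in> S \<and> y \<in> S}"

text \<open>A network of architecture (d 0, ..., d m, 1) is given by weights W i j k
  (layer i, output j < d i, input k < d (i-1)) and biases b i j, for
  1 <= i <= m+1.  A_i is aff W b d i.\<close>

definition aff :: "(nat \<Rightarrow> nat \<Rightarrow> nat \<Rightarrow> real) \<Rightarrow> (nat \<Rightarrow> nat \<Rightarrow> real) \<Rightarrow> (nat \<Rightarrow> nat)
    \<Rightarrow> nat \<Rightarrow> (nat \<Rightarrow> real) \<Rightarrow> (nat \<Rightarrow> real)" where
  "aff W b d i y = (\<lambda>j. if j < d i then b i j + (\<Sum>k<d (i - 1). W i j k * y k) else 0)"

definition layer :: "(nat \<Rightarrow> nat \<Rightarrow> nat \<Rightarrow> real) \<Rightarrow> (nat \<Rightarrow> nat \<Rightarrow> real) \<Rightarrow> (nat \<Rightarrow> nat)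
    \<Rightarrow> nat \<Rightarrow> (nat \<Rightarrow> real) \<Rightarrow> (nat \<Rightarrow> real)" where
  "layer W b d i y = (\<lambda>j. max 0 (aff W b d i y j))"

text \<open>comp W b d a j = F_{a+j-1} o ... o F_a  (identity for j = 0).
  In particular comp W b d 1 k = F_(k).\<close>
fun comp :: "(nat \<Rightarrow> nat \<Rightarrow> nat \<Rightarrow> real) \<Rightarrow> (nat \<Rightarrow> nat \<Rightarrow> real) \<Rightarrow> (nat \<Rightarrow> nat)
    \<Rightarrow> nat \<Rightarrow> nat \<Rightarrow> (nat \<Rightarrow> real) \<Rightarrow> (nat \<Rightarrow> real)" where
  "comp W b d a 0 y = y"
| "comp W b d a (Suc j) y = layer W b d (a + j) (comp W b d a j y)"

definition hyp :: "(nat \<Rightarrow> nat \<Rightarrow> nat \<Rightarrow> real) \<Rightarrow> (nat \<Rightarrow> nat \<Rightarrow> real) \<Rightarrow> (nat \<Rightarrow> nat)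
    \<Rightarrow> nat \<Rightarrow> nat \<Rightarrow> (nat \<Rightarrow> real) set" where
  "hyp W b d i j = {y \<in> vec (d (i - 1)). aff W b d i y j = 0}"

text \<open>The cells of the complex R^{(i)} on R^{n_{i-1}}: nonempty intersections of
  one choice among {>= 0}, {<= 0}, {= 0} for each j (choice encoded by
  c j = 1, -1, 0 respectively).\<close>
definition Rcx :: "(nat \<Rightarrow> nat \<Rightarrow> nat \<Rightarrow> real) \<Rightarrow> (nat \<Rightarrow> nat \<Rightarrow> real) \<Rightarrow> (nat \<Rightarrow> nat)
    \<Rightarrow> nat \<Rightarrow> (nat \<Rightarrow> real) set set" where
  "Rcx W b d i = {C. C \<noteq> {} \<and> (\<exists>c::nat \<Rightarrow> int. (\<forall>j<d i. c j \<in> {-1, 0, 1}) \<and>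
     C = {y \<in> vec (d (i - 1)). \<forall>j<d i.
            (c j = 1 \<longrightarrow> aff W b d i y j \<ge> 0) \<and>
            (c j = -1 \<longrightarrow> aff W b d i y j \<le> 0) \<and>
            (c j = 0 \<longrightarrow> aff W b d i y j = 0)})}"

text \<open>canon W b d a k: canonical polyhedral complex (on R^{n_{a-1}}) of the
  network consisting of the k layers a, ..., a+k-1; built by the recursion
  C(F_(k)) = {C \<inter> F_(k-1)^{-1}(R) nonempty : C in C(F_(k-1)), R in R^{(k)}},
  starting from the trivial complex {R^{n_{a-1}}} (so that canon a 1 = R^{(a)}).
  C(F) = canon 1 (m+1), C(F^{(k)}) = canon k (m+2-k).\<close>
fun canon :: "(nat \<Rightarrow> nat \<Rightarrow> nat \<Rightarrow> real) \<Rightarrow> (nat \<Rightarrow> nat \<Rightarrow> real) \<Rightarrow> (nat \<Rightarrow> nat)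
    \<Rightarrow> nat \<Rightarrow> nat \<Rightarrow> (nat \<Rightarrow> real) set set" where
  "canon W b d a 0 = {vec (d (a - 1))}"
| "canon W b d a (Suc k) =
     {E. E \<noteq> {} \<and> (\<exists>C \<in> canon W b d a k. \<exists>R \<in> Rcx W b d (a + k).
            E = C \<inter> {x \<in> vec (d (a - 1)). comp W b d a k x \<in> R})}"

definition node :: "(nat \<Rightarrow> nat \<Rightarrow> nat \<Rightarrow> real) \<Rightarrow> (nat \<Rightarrow> nat \<Rightarrow> real) \<Rightarrow> (nat \<Rightarrow> nat)
    \<Rightarrow> nat \<Rightarrow> nat \<Rightarrow> (nat \<Rightarrow> real) \<Rightarrow> real" where
  "node W b d i j x = aff W b d i (comp W b d 1 (i - 1) x) j"

definition nodes :: "(nat \<Rightarrow> nat) \<Rightarrow> nat \<Rightarrow> (nat \<times> nat) set" where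
  "nodes d m = {(i, j). 1 \<le> i \<and> i \<le> m + 1 \<and> j < d i}"

definition signseq :: "(nat \<Rightarrow> nat \<Rightarrow> nat \<Rightarrow> real) \<Rightarrow> (nat \<Rightarrow> nat \<Rightarrow> real) \<Rightarrow> (nat \<Rightarrow> nat)
    \<Rightarrow> nat \<Rightarrow> (nat \<Rightarrow> real) set \<Rightarrow> nat \<times> nat \<Rightarrow> real" where
  "signseq W b d m C = (\<lambda>(i, j). if (i, j) \<in> nodes d m
      then sgn (node W b d i j (SOME x. x \<in> rel_interior C)) else 0)"

definition cube_face :: "(nat \<times> nat) set \<Rightarrow> (nat \<times> nat \<Rightarrow> real) \<Rightarrow> (nat \<times> nat \<Rightarrow> real) set" where
  "cube_face I \<sigma> = {x. (\<forall>l\<in>I. -1 \<le> x l \<and> x l \<le> 1 \<and> (\<sigma> l \<noteq> 0 \<longrightarrow> x l = \<sigma> l))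
                       \<and> (\<forall>l. l \<notin> I \<longrightarrow> x l = 0)}"

definition cube_dim :: "(nat \<times> nat) set \<Rightarrow> (nat \<times> nat \<Rightarrow> real) \<Rightarrow> nat" where
  "cube_dim I \<sigma> = card {l \<in> I. \<sigma> l = 0}"

definition generic :: "(nat \<Rightarrow> nat \<Rightarrow> nat \<Rightarrow> real) \<Rightarrow> (nat \<Rightarrow> nat \<Rightarrow> real) \<Rightarrow> (nat \<Rightarrow> nat)
    \<Rightarrow> nat \<Rightarrow> bool" where
  "generic W b d m \<longleftrightarrow> (\<forall>i. 1 \<le> i \<and> i \<le> m + 1 \<longrightarrow> (\<forall>J \<subseteq> {..<d i}.
     (let S = vec (d (i - 1)) \<inter> (\<Inter>j\<in>J. hyp W b d i j) in
       (if card J \<le> d (i - 1) then S \<noteq> {} \<and> adim S = d (i - 1) - card J else S = {}))))"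

text \<open>Transversality of f restricted to rel_interior C (f affine on C) to the
  relatively open polyhedron rel_interior D in R^n: at every point x of
  rel_interior C mapped into rel_interior D, the image of the tangent space of C
  under the differential of f, i.e. span {f y - f x | y in C}, together with the
  tangent space of D spans R^n.\<close>
definition transverse_on :: "((nat \<Rightarrow> real) \<Rightarrow> (nat \<Rightarrow> real)) \<Rightarrow> (nat \<Rightarrow> real) set
    \<Rightarrow> (nat \<Rightarrow> real) set \<Rightarrow> nat \<Rightarrow> bool" where
  "transverse_on f C D n \<longleftrightarrow> (\<forall>x \<in> rel_interior C. f x \<in> rel_interior D \<longrightarrow>
     span ({f y - f x | y. y \<in> C} \<union> {z - w | z w. z \<in> D \<and> w \<in> D}) = vec n)"

definition supertransversal :: "(nat \<Rightarrow> nat \<Rightarrow> nat \<Rightarrow> real) \<Rightarrow> (nat \<Rightarrow> nat \<Rightarrow> real) \<Rightarrow> (nat \<Rightarrow> nat)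
    \<Rightarrow> nat \<Rightarrow> bool" where
  "supertransversal W b d m \<longleftrightarrow> (\<forall>i. 1 \<le> i \<and> i \<le> m \<longrightarrow>
     (\<forall>C \<in> Rcx W b d i. \<forall>D \<in> canon W b d (i + 1) (m + 1 - i).
        transverse_on (layer W b d i) C D (d i)))"

end

(*
  Each cell C of the canonical complex is the set of inputs at which every pre-activation F_ij
  has the weak sign s_ij(C), and the sign sequence of any point of its relative interior is
  s(C). Hence C is a face of D iff s(D) agrees with s(C) off the zeros of s(C), i.e. iff
  Q_s(D) is a face of Q_s(C). On C the network is affine, and the tangent space of C is the
  common kernel of the linearised pre-activations of the zero nodes of s(C). Genericity of each
  layer together with supertransversality of the later layers make these functionals linearly
  independent (by induction over the layers), so dim C = n_0 minus the number of zeros of s(C),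
  i.e. dim C + dim Q_s(C) = n_0. The codimension-one statements follow by counting zeros.
*)
theory Submission
  imports Defs
begin

text \<open>Being disjunctive, \<open>has_weak_sign c v\<close> fails for \<open>c \<notin> {-1, 0, 1}\<close>, so a nonempty
  cell carved out by a pattern forces the pattern to be a sign vector.\<close>
definition has_weak_sign :: "int \<Rightarrow> real \<Rightarrow> bool" where
  "has_weak_sign c v \<longleftrightarrow> c = 1 \<and> 0 \<le> v \<or> c = -1 \<and> v \<le> 0 \<or> c = 0 \<and> v = 0"

definition int_sgn :: "real \<Rightarrow> int" where
  "int_sgn v = (if 0 < v then 1 else if v < 0 then -1 else 0)"

lemma of_int_int_sgn: "real_of_int (int_sgn v) = sgn v"
  by (simp add: int_sgn_def sgn_if)

lemma int_sgn_eq_0_iff [simp]: "int_sgn v = 0 \<longleftrightarrow> v = 0"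
  by (simp add: int_sgn_def)

lemma has_weak_sign_int_sgn [simp]: "has_weak_sign (int_sgn v) v"
  by (simp add: has_weak_sign_def int_sgn_def)

lemma has_weak_sign_range: "has_weak_sign c v \<Longrightarrow> c \<in> {-1, 0, 1}"
  by (auto simp: has_weak_sign_def)

lemma has_weak_sign_iff:
  "c \<in> {-1, 0, 1} \<Longrightarrow>
    has_weak_sign c v \<longleftrightarrow> (c = 1 \<longrightarrow> 0 \<le> v) \<and> (c = -1 \<longrightarrow> v \<le> 0) \<and> (c = 0 \<longrightarrow> v = 0)"
  by (auto simp: has_weak_sign_def)

lemma has_weak_sign_0_iff [simp]: "has_weak_sign c 0 \<longleftrightarrow> c \<in> {-1, 0, 1}"
  by (auto simp: has_weak_sign_def)

lemma has_weak_sign_eq_int_sgn: "has_weak_sign c v \<Longrightarrow> v \<noteq> 0 \<Longrightarrow> c = int_sgn v"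
  by (auto simp: has_weak_sign_def int_sgn_def)

lemma has_weak_sign_int_sgn_iff:
  "has_weak_sign c v \<Longrightarrow> has_weak_sign (int_sgn v) w \<longleftrightarrow> has_weak_sign c w \<and> (v = 0 \<longrightarrow> w = 0)"
  by (auto simp: has_weak_sign_def int_sgn_def)

lemma int_sgn_mult_pos: "v \<noteq> 0 \<Longrightarrow> 0 < real_of_int (int_sgn v) * v"
  by (simp add: int_sgn_def zero_less_mult_iff)

lemma has_weak_sign_of_mult_pos: "c \<in> {-1, 0, 1} \<Longrightarrow> 0 < real_of_int c * v \<Longrightarrow> has_weak_sign c v"
  by (auto simp: has_weak_sign_def)

lemma has_weak_sign_convex:
  "has_weak_sign c p \<Longrightarrow> has_weak_sign c q \<Longrightarrow> 0 \<le> u \<Longrightarrow> 0 \<le> v \<Longrightarrow> has_weak_sign c (u * p + v * q)"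
  by (auto simp: has_weak_sign_def intro: add_nonpos_nonpos mult_nonneg_nonpos)

lemma has_weak_sign_midpoint_eq_0:
  "has_weak_sign c p \<Longrightarrow> has_weak_sign c q \<Longrightarrow> p / 2 + q / 2 = 0 \<Longrightarrow> p = 0 \<and> q = 0"
  by (auto simp: has_weak_sign_def)

lemma has_weak_sign_extrapolate_eq_0:
  "has_weak_sign c p \<Longrightarrow> has_weak_sign c (- t * p) \<Longrightarrow> 0 < t \<Longrightarrow> p = 0"
  by (auto simp: has_weak_sign_def mult_le_0_iff zero_le_mult_iff)

lemma has_weak_sign_perturb:
  assumes "v \<noteq> 0" "0 < t" "t \<le> \<bar>v\<bar> / (\<bar>p\<bar> + 1)"
  shows "has_weak_sign (int_sgn v) (v + t * p)"
proof -
  have "t * \<bar>p\<bar> < \<bar>v\<bar>"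
    using assms(2,3) by (simp add: pos_le_divide_eq add_pos_nonneg algebra_simps)
  then have "\<bar>t * p\<bar> < \<bar>v\<bar>"
    using assms(2) by (simp add: abs_mult)
  then show ?thesis
    using assms(1) by (auto simp: has_weak_sign_def int_sgn_def abs_if split: if_splits)
qed

lemma exists_small_step:
  assumes "finite N"
  obtains t :: real where "0 < t" "\<forall>l\<in>N. g l \<noteq> 0 \<longrightarrow> t \<le> \<bar>g l\<bar> / (\<bar>p l\<bar> + 1)"
proof
  let ?t = "Min (insert 1 ((\<lambda>l. \<bar>g l\<bar> / (\<bar>p l\<bar> + 1)) ` {l \<in> N. g l \<noteq> 0}))"
  show "0 < ?t"
    using assms by (subst Min_gr_iff) (auto simp: add_pos_nonneg)
  show "\<forall>l\<in>N. g l \<noteq> 0 \<longrightarrow> ?t \<le> \<bar>g l\<bar> / (\<bar>p l\<bar> + 1)"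
    using assms by (auto intro: Min_le)
qed

lemma scaleR_fun_apply [simp]: "(r *\<^sub>R f) x = r *\<^sub>R f x"
  by (simp add: scaleR_fun_def)

lemma sum_fun_apply: "(\<Sum>i\<in>A. f i) x = (\<Sum>i\<in>A. f i x)"
  by (induction A rule: infinite_finite_induct) auto

definition affine_map :: "('a::real_vector \<Rightarrow> 'b::real_vector) \<Rightarrow> bool" where
  "affine_map f \<longleftrightarrow> (\<forall>x y u v. u + v = 1 \<longrightarrow> f (u *\<^sub>R x + v *\<^sub>R y) = u *\<^sub>R f x + v *\<^sub>R f y)"

lemma affine_mapD: "affine_map f \<Longrightarrow> u + v = 1 \<Longrightarrow> f (u *\<^sub>R x + v *\<^sub>R y) = u *\<^sub>R f x + v *\<^sub>R f y"
  by (simp add: affine_map_def)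

lemma affine_map_id: "affine_map (\<lambda>x. x)"
  by (simp add: affine_map_def)

lemma affine_map_apply: "affine_map f \<Longrightarrow> affine_map (\<lambda>x. f x i)"
  by (simp add: affine_map_def fun_eq_iff)

lemma affine_map_compose: "affine_map f \<Longrightarrow> affine_map g \<Longrightarrow> affine_map (\<lambda>x. f (g x))"
  by (simp add: affine_map_def)

lemma linear_affine_map_diff:
  assumes "affine_map f"
  shows "linear (\<lambda>x. f x - f 0)"
proof -
  have scale: "f (r *\<^sub>R x) - f 0 = r *\<^sub>R (f x - f 0)" for r x
    using affine_mapD[OF assms, of "1 - r" r 0 x] by (simp add: algebra_simps)
  show ?thesis
  proof (rule linearI)
    fix x y
    have "f (x + y) - f 0 = 2 *\<^sub>R (f ((1/2) *\<^sub>R x + (1/2) *\<^sub>R y) - f 0)"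
      using scale[of 2 "(1/2) *\<^sub>R x + (1/2) *\<^sub>R y"] by (simp add: scaleR_add_right)
    also have "\<dots> = (f x - f 0) + (f y - f 0)"
      by (simp add: affine_mapD[OF assms] algebra_simps scaleR_add_right scaleR_2)
    finally show "f (x + y) - f 0 = (f x - f 0) + (f y - f 0)" .
  qed (rule scale)
qed

lemma affine_map_line:
  assumes "affine_map f"
  shows "f (x + t *\<^sub>R v) = f x + t *\<^sub>R (f v - f 0)"
proof -
  interpret linear "\<lambda>x. f x - f 0"
    by (rule linear_affine_map_diff[OF assms])
  have "f (x + t *\<^sub>R v) - f 0 = (f x - f 0) + t *\<^sub>R (f v - f 0)"
    by (simp add: add scale)
  then show ?thesis by (simp add: algebra_simps)
qed

lemma rel_interior_prolong:
  fixes S :: "('i \<Rightarrow> real) set"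
  assumes "x \<in> rel_interior S" "y \<in> S"
  shows "\<exists>t>0. x + t *\<^sub>R (x - y) \<in> S"
proof -
  obtain T where T: "open T" "x \<in> T" "T \<inter> affine hull S \<subseteq> S" and "x \<in> S"
    using assms(1) by (auto simp: rel_interior)
  define p where "p t = x + t *\<^sub>R (x - y)" for t :: real
  have "continuous_on UNIV p"
    unfolding p_def by (intro continuous_on_coordinatewise_then_product) (auto intro!: continuous_intros)
  then have "open (p -` T)"
    using T(1) by (simp add: continuous_on_open_vimage)
  moreover have "0 \<in> p -` T"
    using T(2) by (simp add: p_def)
  ultimately obtain e where e: "e > 0" "ball 0 e \<subseteq> p -` T"
    by (meson open_contains_ball)
  moreover have "e/2 \<in> ball 0 e"
    using e(1) by (simp add: dist_real_def)
  ultimately have "p (e/2) \<in> T"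
    by blast
  moreover have "p (e/2) = (1 + e/2) *\<^sub>R x + (- (e/2)) *\<^sub>R y"
    by (simp add: p_def algebra_simps)
  then have "p (e/2) \<in> affine hull S"
    using mem_affine[OF affine_affine_hull hull_inc[OF \<open>x \<in> S\<close>] hull_inc[OF assms(2)],
        of "1 + e/2" "- (e/2)"] by simp
  ultimately have "p (e/2) \<in> S"
    using T(3) by blast
  then show ?thesis
    using e(1) unfolding p_def by (intro exI[of _ "e/2"]) simp
qed

section \<open>Common kernels of linear functionals\<close>

lemma vec_eq_span: "vec n = span ((\<lambda>k. indicator {k}) ` {..<n})"
proof
  show "vec n \<subseteq> span ((\<lambda>k. indicator {k}) ` {..<n})"
  proof
    fix x :: "nat \<Rightarrow> real" assume x: "x \<in> vec n"
    have "x = (\<Sum>k<n. x k *\<^sub>R indicator {k})"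
    proof
      fix i
      have "(\<Sum>k<n. x k *\<^sub>R indicator {k}) i = (\<Sum>k<n. if k = i then x i else 0)"
        by (simp add: sum_fun_apply indicator_def)
      then show "x i = (\<Sum>k<n. x k *\<^sub>R indicator {k}) i"
        using x by (simp add: vec_def)
    qed
    then show "x \<in> span ((\<lambda>k. indicator {k}) ` {..<n})"
      by (metis (no_types, lifting) image_eqI lessThan_iff span_base span_scale span_sum)
  qed
  show "span ((\<lambda>k. indicator {k}) ` {..<n}) \<subseteq> vec n"
    by (rule span_minimal) (auto simp: vec_def subspace_def)
qed

definition independent_functionals :: "'a::real_vector set \<Rightarrow> ('l \<Rightarrow> 'a \<Rightarrow> real) \<Rightarrow> 'l set \<Rightarrow> bool" where
  "independent_functionals V \<phi> L \<longleftrightarrow> (\<forall>\<alpha>. (\<forall>v\<in>V. (\<Sum>l\<in>L. \<alpha> l * \<phi> l v) = 0) \<longrightarrow> (\<forall>l\<in>L. \<alpha> l = 0))"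

lemma subspace_common_kernel:
  assumes "subspace V" "\<forall>l\<in>L. linear (\<phi> l :: 'a::real_vector \<Rightarrow> real)"
  shows "subspace {v \<in> V. \<forall>l\<in>L. \<phi> l v = 0}"
  using assms unfolding subspace_def by (auto simp: linear_0 linear_add linear_scale)

lemma sum_insert_fun_upd:
  assumes "finite L" "l\<^sub>0 \<notin> L"
  shows "(\<Sum>l\<in>insert l\<^sub>0 L. (\<alpha>(l\<^sub>0 := c)) l * f l) = c * f l\<^sub>0 + (\<Sum>l\<in>L. \<alpha> l * f l)"
proof -
  have "(\<Sum>l\<in>L. (\<alpha>(l\<^sub>0 := c)) l * f l) = (\<Sum>l\<in>L. \<alpha> l * f l)"
    using assms(2) by (intro sum.cong) auto
  then show ?thesis
    using assms by simp
qed

lemma dim_kernel_functional: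
  fixes \<phi> :: "'a::real_vector \<Rightarrow> real"
  assumes S: "subspace S" "S \<subseteq> span F" "finite F" and "linear \<phi>" and u: "u \<in> S" "\<phi> u \<noteq> 0"
  shows "dim S = dim {v \<in> S. \<phi> v = 0} + 1"
proof -
  let ?K = "{v \<in> S. \<phi> v = 0}"
  interpret \<phi>: linear \<phi> by fact
  obtain B where B: "B \<subseteq> ?K" "independent B" "?K \<subseteq> span B" "card B = dim ?K"
    using basis_exists[of ?K] by blast
  have "finite B"
    using independent_span_bound[OF S(3) B(2)] B(1) S(2) by blast
  have "span B \<subseteq> ?K"
    using subspace_common_kernel[OF S(1), of "{()}" "\<lambda>_. \<phi>"] \<open>linear \<phi>\<close> B(1)
    by (simp add: span_minimal)
  then have "u \<notin> span B"
    using u(2) by blast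
  show ?thesis
  proof (rule dim_unique[of "insert u B"])
    show "insert u B \<subseteq> S"
      using B(1) u(1) by blast
    show "independent (insert u B)"
      using B(2) \<open>u \<notin> span B\<close> by (simp add: independent_insertI)
    have "u \<notin> B"
      using \<open>u \<notin> span B\<close> span_base by blast
    then show "card (insert u B) = dim ?K + 1"
      using \<open>finite B\<close> B(4) by simp
    show "S \<subseteq> span (insert u B)"
    proof
      fix v assume "v \<in> S"
      define t where "t = \<phi> v / \<phi> u"
      have "v - t *\<^sub>R u \<in> ?K"
        using S(1) \<open>v \<in> S\<close> u by (simp add: subspace_diff subspace_scale \<phi>.diff \<phi>.scale t_def)
      then have "v - t *\<^sub>R u \<in> span (insert u B)"
        using B(3) span_mono[of B "insert u B"] by blast
      then have "(v - t *\<^sub>R u) + t *\<^sub>R u \<in> span (insert u B)"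
        by (meson insertI1 span_add span_base span_scale)
      then show "v \<in> span (insert u B)"
        by simp
    qed
  qed
qed

lemma functional_vanishing_on_common_kernel:
  fixes \<psi> :: "'a::real_vector \<Rightarrow> real"
  assumes "finite L" "subspace V" "\<forall>l\<in>L. linear (\<phi> l)" "linear \<psi>"
    and "\<forall>v\<in>V. (\<forall>l\<in>L. \<phi> l v = 0) \<longrightarrow> \<psi> v = 0"
  shows "\<exists>\<alpha>. \<forall>v\<in>V. \<psi> v = (\<Sum>l\<in>L. \<alpha> l * \<phi> l v)"
  using assms
proof (induction L arbitrary: V rule: finite_induct)
  case empty
  then show ?case by auto
next
  case (insert l\<^sub>0 L)
  interpret \<phi>\<^sub>0: linear "\<phi> l\<^sub>0"
    using insert.prems(2) by simp
  interpret \<psi>: linear \<psi> by fact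
  let ?V' = "{v \<in> V. \<forall>l\<in>{l\<^sub>0}. \<phi> l v = 0}"
  have "subspace ?V'"
    using subspace_common_kernel[OF insert.prems(1), of "{l\<^sub>0}" \<phi>] insert.prems(2) by simp
  then obtain \<alpha> where \<alpha>: "\<forall>v\<in>?V'. \<psi> v = (\<Sum>l\<in>L. \<alpha> l * \<phi> l v)"
    using insert.IH insert.prems(2-4) by force
  show ?case
  proof (cases "\<forall>v\<in>V. \<phi> l\<^sub>0 v = 0")
    case True
    then show ?thesis
      using \<alpha> sum_insert_fun_upd[OF insert.hyps, of \<alpha> 0] by (intro exI[of _ "\<alpha>(l\<^sub>0 := 0)"]) auto
  next
    case False
    then obtain u where u: "u \<in> V" "\<phi> l\<^sub>0 u \<noteq> 0" by blast
    define c where "c = (\<psi> u - (\<Sum>l\<in>L. \<alpha> l * \<phi> l u)) / \<phi> l\<^sub>0 u"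
    have "\<psi> v = c * \<phi> l\<^sub>0 v + (\<Sum>l\<in>L. \<alpha> l * \<phi> l v)" if "v \<in> V" for v
    proof -
      define t where "t = \<phi> l\<^sub>0 v / \<phi> l\<^sub>0 u"
      have "v - t *\<^sub>R u \<in> ?V'"
        using insert.prems(1) \<open>v \<in> V\<close> u
        by (simp add: subspace_diff subspace_scale \<phi>\<^sub>0.diff \<phi>\<^sub>0.scale t_def)
      moreover have "\<psi> (v - t *\<^sub>R u) = \<psi> v - t * \<psi> u"
        by (simp add: \<psi>.diff \<psi>.scale)
      ultimately have "\<psi> v - t * \<psi> u = (\<Sum>l\<in>L. \<alpha> l * \<phi> l (v - t *\<^sub>R u))"
        using \<alpha> by simp
      also have "\<dots> = (\<Sum>l\<in>L. \<alpha> l * \<phi> l v) - t * (\<Sum>l\<in>L. \<alpha> l * \<phi> l u)"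
        using insert.prems(2)
        by (simp add: linear_diff linear_scale sum_subtractf sum_distrib_left algebra_simps cong: sum.cong)
      finally have "\<psi> v - t * \<psi> u = (\<Sum>l\<in>L. \<alpha> l * \<phi> l v) - t * (\<Sum>l\<in>L. \<alpha> l * \<phi> l u)" .
      moreover have "c * \<phi> l\<^sub>0 v = t * (\<psi> u - (\<Sum>l\<in>L. \<alpha> l * \<phi> l u))"
        using u(2) by (simp add: c_def t_def)
      ultimately show ?thesis
        by (simp add: algebra_simps)
    qed
    then show ?thesis
      using sum_insert_fun_upd[OF insert.hyps, of \<alpha> c] by (intro exI[of _ "\<alpha>(l\<^sub>0 := c)"]) auto
  qed
qed

lemma independent_functionals_insertD:
  assumes "independent_functionals V \<phi> (insert l\<^sub>0 L)" "finite L" "l\<^sub>0 \<notin> L"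
  shows "independent_functionals V \<phi> L"
  unfolding independent_functionals_def
proof (intro allI impI)
  fix \<alpha> assume "\<forall>v\<in>V. (\<Sum>l\<in>L. \<alpha> l * \<phi> l v) = 0"
  then have "\<forall>v\<in>V. (\<Sum>l\<in>insert l\<^sub>0 L. (\<alpha>(l\<^sub>0 := 0)) l * \<phi> l v) = 0"
    by (simp add: sum_insert_fun_upd[OF assms(2,3)] del: fun_upd_apply)
  then have "\<forall>l\<in>insert l\<^sub>0 L. (\<alpha>(l\<^sub>0 := 0)) l = 0"
    using assms(1) unfolding independent_functionals_def by blast
  then show "\<forall>l\<in>L. \<alpha> l = 0"
    using assms(3) by (auto split: if_splits)
qed

lemma dim_common_kernel:
  fixes \<phi> :: "'l \<Rightarrow> 'a::real_vector \<Rightarrow> real"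
  assumes V: "subspace V" "V \<subseteq> span F" "finite F" and "finite L"
    and "\<forall>l\<in>L. linear (\<phi> l)" and "independent_functionals V \<phi> L"
  shows "dim {v \<in> V. \<forall>l\<in>L. \<phi> l v = 0} + card L = dim V"
  using \<open>finite L\<close> assms(5,6)
proof (induction L rule: finite_induct)
  case empty
  then show ?case by simp
next
  case (insert l\<^sub>0 L)
  let ?K = "{v \<in> V. \<forall>l\<in>L. \<phi> l v = 0}"
  have "independent_functionals V \<phi> L"
    using insert.prems(2) insert.hyps by (rule independent_functionals_insertD)
  then have IH: "dim ?K + card L = dim V"
    using insert by simp
  have "\<exists>u\<in>?K. \<phi> l\<^sub>0 u \<noteq> 0"
  proof (rule ccontr)
    assume "\<not> ?thesis"
    then obtain \<alpha> where \<alpha>: "\<forall>v\<in>V. \<phi> l\<^sub>0 v = (\<Sum>l\<in>L. \<alpha> l * \<phi> l v)"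
      using functional_vanishing_on_common_kernel[OF insert.hyps(1) V(1), of \<phi> "\<phi> l\<^sub>0"] insert.prems(1)
      by blast
    have "\<forall>v\<in>V. (\<Sum>l\<in>insert l\<^sub>0 L. ((\<lambda>l. - \<alpha> l)(l\<^sub>0 := 1)) l * \<phi> l v) = 0"
      using \<alpha> sum_insert_fun_upd[OF insert.hyps, of "\<lambda>l. - \<alpha> l" 1] by (simp add: sum_negf)
    then have "\<forall>l\<in>insert l\<^sub>0 L. ((\<lambda>l. - \<alpha> l)(l\<^sub>0 := 1)) l = 0"
      using insert.prems(2) unfolding independent_functionals_def by blast
    then show False
      by simp
  qed
  then obtain u where "u \<in> ?K" "\<phi> l\<^sub>0 u \<noteq> 0" by blast
  moreover have "subspace ?K"
    using subspace_common_kernel[OF V(1), of L \<phi>] insert.prems(1) by simp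
  ultimately have "dim ?K = dim {v \<in> ?K. \<phi> l\<^sub>0 v = 0} + 1"
    using dim_kernel_functional[of ?K F "\<phi> l\<^sub>0" u] V(2,3) insert.prems(1) by auto
  moreover have "{v \<in> ?K. \<phi> l\<^sub>0 v = 0} = {v \<in> V. \<forall>l\<in>insert l\<^sub>0 L. \<phi> l v = 0}"
    by auto
  ultimately show ?case
    using IH insert.hyps by simp
qed

lemma subspace_vec: "subspace (vec n)"
  by (simp add: vec_eq_span subspace_span)

lemma dim_vec: "dim (vec n) = n"
proof -
  let ?e = "\<lambda>k. indicator {k} :: nat \<Rightarrow> real"
  have "inj_on ?e {..<n}"
  proof (rule inj_onI)
    fix x y assume "?e x = ?e y"
    then have "?e x x = ?e y x" by simp
    then show "x = y" by (simp add: indicator_def split: if_splits)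
  qed
  have "independent (?e ` {..<n})"
  proof (rule independent_if_scalars_zero)
    fix f x assume sum: "(\<Sum>x\<in>?e ` {..<n}. f x *\<^sub>R x) = 0" and "x \<in> ?e ` {..<n}"
    then obtain k where "k < n" "x = ?e k" by auto
    have "(\<Sum>x\<in>?e ` {..<n}. f x *\<^sub>R x) k = (\<Sum>i<n. f (?e i) * ?e i k)"
      by (simp add: sum.reindex[OF \<open>inj_on ?e {..<n}\<close>] sum_fun_apply)
    also have "\<dots> = f (?e k)"
      using \<open>k < n\<close> by (simp add: indicator_def)
    finally show "f x = 0"
      using sum \<open>x = ?e k\<close> by simp
  qed simp
  then show ?thesis
    using \<open>inj_on ?e {..<n}\<close> by (simp add: vec_eq_span dim_eq_card_independent card_image)
qed

lemma transverse_on_vanishing_functional: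
  assumes "transverse_on f C D n" "x \<in> rel_interior C" "f x \<in> rel_interior D" "linear \<psi>"
    and "\<forall>y\<in>C. \<psi> (f y - f x) = 0" "\<forall>z\<in>D. \<forall>w\<in>D. \<psi> (z - w) = 0"
  shows "\<forall>v\<in>vec n. \<psi> v = (0 :: real)"
proof -
  have "span ({f y - f x | y. y \<in> C} \<union> {z - w | z w. z \<in> D \<and> w \<in> D}) = vec n"
    using assms(1-3) unfolding transverse_on_def by blast
  moreover have "\<forall>g\<in>{f y - f x | y. y \<in> C} \<union> {z - w | z w. z \<in> D \<and> w \<in> D}. \<psi> g = 0"
    using assms(5,6) by blast
  ultimately show ?thesis
    using linear_eq_0_on_span[OF assms(4)] by blast
qed

lemma cube_face_subset_iff:
  assumes "\<forall>l\<in>I. \<sigma> l \<in> {-1, 0, 1}"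
  shows "cube_face I \<sigma> \<subseteq> cube_face I \<tau> \<longleftrightarrow> (\<forall>l\<in>I. \<tau> l \<noteq> 0 \<longrightarrow> \<sigma> l = \<tau> l)"
proof
  assume sub: "cube_face I \<sigma> \<subseteq> cube_face I \<tau>"
  define p where "p l = (if l \<in> I then \<sigma> l else 0)" for l
  have "p \<in> cube_face I \<sigma>"
    using assms by (auto simp: cube_face_def p_def)
  then have "p \<in> cube_face I \<tau>"
    using sub by blast
  then show "\<forall>l\<in>I. \<tau> l \<noteq> 0 \<longrightarrow> \<sigma> l = \<tau> l"
    by (simp add: cube_face_def p_def)
qed (auto simp: cube_face_def)

lemma refines_with_one_zero_less_iff:
  fixes \<sigma> \<tau> :: "'a \<Rightarrow> 'b::zero"
  assumes "finite N"
  shows "(\<forall>l\<in>N. \<sigma> l \<noteq> 0 \<longrightarrow> \<tau> l = \<sigma> l) \<and> card {l \<in> N. \<tau> l = 0} + 1 = card {l \<in> N. \<sigma> l = 0}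
    \<longleftrightarrow> (\<exists>l\<in>N. \<sigma> l = 0 \<and> \<tau> l \<noteq> 0 \<and> (\<forall>l'\<in>N. l' \<noteq> l \<longrightarrow> \<tau> l' = \<sigma> l'))"
    (is "?refines \<and> card ?Z\<tau> + 1 = card ?Z\<sigma> \<longleftrightarrow> _")
proof
  assume H: "?refines \<and> card ?Z\<tau> + 1 = card ?Z\<sigma>"
  then have "?Z\<tau> \<subseteq> ?Z\<sigma>" "card ?Z\<tau> + 1 = card ?Z\<sigma>"
    by auto
  then have "card (?Z\<sigma> - ?Z\<tau>) = 1"
    using assms by (simp add: card_Diff_subset)
  then obtain l where l: "?Z\<sigma> - ?Z\<tau> = {l}"
    by (auto simp: card_Suc_eq)
  then have "\<tau> l' = \<sigma> l'" if "l' \<in> N" "l' \<noteq> l" for l'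
    using H that by (cases "\<sigma> l' = 0") auto
  with l show "\<exists>l\<in>N. \<sigma> l = 0 \<and> \<tau> l \<noteq> 0 \<and> (\<forall>l'\<in>N. l' \<noteq> l \<longrightarrow> \<tau> l' = \<sigma> l')"
    by blast
next
  assume "\<exists>l\<in>N. \<sigma> l = 0 \<and> \<tau> l \<noteq> 0 \<and> (\<forall>l'\<in>N. l' \<noteq> l \<longrightarrow> \<tau> l' = \<sigma> l')"
  then obtain l where l: "l \<in> N" "\<sigma> l = 0" "\<tau> l \<noteq> 0" and others: "\<forall>l'\<in>N. l' \<noteq> l \<longrightarrow> \<tau> l' = \<sigma> l'"
    by blast
  then have "?Z\<sigma> = insert l ?Z\<tau>" "l \<notin> ?Z\<tau>"
    by auto
  then show "?refines \<and> card ?Z\<tau> + 1 = card ?Z\<sigma>"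
    using l others assms by auto
qed

lemma cube_face_codim_one_iff:
  assumes "finite I" "\<forall>l\<in>I. \<sigma> l \<in> {-1, 0, 1}" "\<forall>l\<in>I. \<tau> l \<in> {-1, 0, 1}"
  shows "cube_face I \<tau> \<subseteq> cube_face I \<sigma> \<and> cube_dim I \<tau> + 1 = cube_dim I \<sigma> \<longleftrightarrow>
    (\<exists>l\<in>I. \<sigma> l = 0 \<and> \<tau> l \<in> {-1, 1} \<and> (\<forall>l'\<in>I. l' \<noteq> l \<longrightarrow> \<tau> l' = \<sigma> l'))"
proof -
  have "(\<exists>l\<in>I. \<sigma> l = 0 \<and> \<tau> l \<noteq> 0 \<and> R l) \<longleftrightarrow> (\<exists>l\<in>I. \<sigma> l = 0 \<and> \<tau> l \<in> {-1, 1} \<and> R l)" for R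
    using assms(3) by fastforce
  then show ?thesis
    using refines_with_one_zero_less_iff[OF assms(1), of \<sigma> \<tau>]
    by (simp only: cube_face_subset_iff[OF assms(3)] cube_dim_def)
qed

section \<open>Cells of a ReLU network as sign pattern polyhedra\<close>

context
  fixes W :: "nat \<Rightarrow> nat \<Rightarrow> nat \<Rightarrow> real" and b :: "nat \<Rightarrow> nat \<Rightarrow> real" and d :: "nat \<Rightarrow> nat"
begin

definition layer_nodes :: "nat \<Rightarrow> nat \<Rightarrow> (nat \<times> nat) set" where
  "layer_nodes a k = {(i, j). a \<le> i \<and> i < a + k \<and> j < d i}"

text \<open>The pre-activation of node \<open>l\<close>, as a function of the input of layer \<open>a\<close>;
  thus \<open>node W b d i j = preact 1 (i, j)\<close>.\<close>
definition preact :: "nat \<Rightarrow> nat \<times> nat \<Rightarrow> (nat \<Rightarrow> real) \<Rightarrow> real" where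
  "preact a l y = aff W b d (fst l) (comp W b d a (fst l - a) y) (snd l)"

definition pattern_cell :: "(nat \<times> nat \<Rightarrow> int) \<Rightarrow> nat \<Rightarrow> nat \<Rightarrow> (nat \<Rightarrow> real) set" where
  "pattern_cell c a k = {y \<in> vec (d (a - 1)). \<forall>l\<in>layer_nodes a k. has_weak_sign (c l) (preact a l y)}"

definition sign_pattern :: "nat \<Rightarrow> nat \<Rightarrow> (nat \<Rightarrow> real) \<Rightarrow> nat \<times> nat \<Rightarrow> int" where
  "sign_pattern a k y l = (if l \<in> layer_nodes a k then int_sgn (preact a l y) else 0)"

text \<open>The network restricted to the cell of pattern \<open>c\<close>, where each ReLU is linear.\<close>
definition pattern_layer :: "(nat \<times> nat \<Rightarrow> int) \<Rightarrow> nat \<Rightarrow> (nat \<Rightarrow> real) \<Rightarrow> nat \<Rightarrow> real" where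
  "pattern_layer c i y = (\<lambda>j. if c (i, j) = 1 then aff W b d i y j else 0)"

fun pattern_comp :: "(nat \<times> nat \<Rightarrow> int) \<Rightarrow> nat \<Rightarrow> nat \<Rightarrow> (nat \<Rightarrow> real) \<Rightarrow> nat \<Rightarrow> real" where
  "pattern_comp c a 0 y = y"
| "pattern_comp c a (Suc k) y = pattern_layer c (a + k) (pattern_comp c a k y)"

definition pattern_preact :: "(nat \<times> nat \<Rightarrow> int) \<Rightarrow> nat \<Rightarrow> nat \<times> nat \<Rightarrow> (nat \<Rightarrow> real) \<Rightarrow> real" where
  "pattern_preact c a l y = aff W b d (fst l) (pattern_comp c a (fst l - a) y) (snd l)"

lemma finite_layer_nodes: "finite (layer_nodes a k)"
proof -
  have "layer_nodes a k = (\<Union>i\<in>{a..<a+k}. {i} \<times> {..<d i})"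
    by (auto simp: layer_nodes_def)
  then show ?thesis by simp
qed

lemma layer_nodes_Suc:
  "layer_nodes a (Suc k) = layer_nodes a k \<union> Pair (a + k) ` {..<d (a + k)}"
  by (force simp: layer_nodes_def less_Suc_eq)

lemma layer_nodes_Suc_first:
  "layer_nodes a (Suc k) = Pair a ` {..<d a} \<union> layer_nodes (Suc a) k"
  by (force simp: layer_nodes_def le_eq_less_or_eq Suc_le_eq)

lemma ball_layer_nodes_Suc:
  "(\<forall>l\<in>layer_nodes a (Suc k). P l) \<longleftrightarrow> (\<forall>l\<in>layer_nodes a k. P l) \<and> (\<forall>j<d (a + k). P (a + k, j))"
  by (auto simp: layer_nodes_Suc)

lemma layer_nodes_mono: "k' \<le> k \<Longrightarrow> layer_nodes a k' \<subseteq> layer_nodes a k"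
  by (auto simp: layer_nodes_def)

lemma pattern_cell_subset_vec: "pattern_cell c a k \<subseteq> vec (d (a - 1))"
  by (auto simp: pattern_cell_def)

lemma preact_first [simp]: "preact a (a, j) y = aff W b d a y j"
  by (simp add: preact_def)

lemma preact_last: "preact a (a + k, j) y = aff W b d (a + k) (comp W b d a k y) j"
  by (simp add: preact_def)

lemma pattern_preact_last: "pattern_preact c a (a + k, j) y = aff W b d (a + k) (pattern_comp c a k y) j"
  by (simp add: pattern_preact_def)

lemma layer_eq_pattern_layer:
  assumes "\<forall>j<d i. has_weak_sign (c (i, j)) (aff W b d i y j)"
  shows "layer W b d i y = pattern_layer c i y"
proof
  fix j
  show "layer W b d i y j = pattern_layer c i y j"
    using assms by (cases "j < d i") (auto simp: layer_def pattern_layer_def aff_def has_weak_sign_def)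
qed

lemma comp_eq_pattern_comp:
  assumes "\<forall>l\<in>layer_nodes a k. has_weak_sign (c l) (preact a l y)"
  shows "comp W b d a k y = pattern_comp c a k y"
  using assms
proof (induction k)
  case (Suc k)
  have IH: "comp W b d a k y = pattern_comp c a k y"
    using Suc by (simp add: layer_nodes_Suc)
  have "\<forall>j<d (a + k). has_weak_sign (c (a + k, j)) (preact a (a + k, j) y)"
    using Suc.prems by (auto simp: layer_nodes_Suc)
  then have "layer W b d (a + k) (comp W b d a k y) = pattern_layer c (a + k) (comp W b d a k y)"
    by (intro layer_eq_pattern_layer) (simp add: preact_last)
  with IH show ?case
    by simp
qed simp

lemma comp_eq_pattern_comp_of_pattern_preact:
  assumes "\<forall>l\<in>layer_nodes a k. has_weak_sign (c l) (pattern_preact c a l y)"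
  shows "comp W b d a k y = pattern_comp c a k y"
  using assms
proof (induction k)
  case (Suc k)
  have IH: "comp W b d a k y = pattern_comp c a k y"
    using Suc by (simp add: layer_nodes_Suc)
  have "\<forall>j<d (a + k). has_weak_sign (c (a + k, j)) (pattern_preact c a (a + k, j) y)"
    using Suc.prems by (auto simp: layer_nodes_Suc)
  then have "layer W b d (a + k) (comp W b d a k y) = pattern_layer c (a + k) (comp W b d a k y)"
    using IH by (intro layer_eq_pattern_layer) (simp add: pattern_preact_last)
  with IH show ?case
    by simp
qed simp

lemma layer_nodes_below:
  "l \<in> layer_nodes a k \<Longrightarrow> layer_nodes a (fst l - a) \<subseteq> layer_nodes a k"
  by (auto simp: layer_nodes_def)

lemma preact_eq_pattern_preact:
  assumes "y \<in> pattern_cell c a k" "l \<in> layer_nodes a k"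
  shows "preact a l y = pattern_preact c a l y"
proof -
  have "comp W b d a (fst l - a) y = pattern_comp c a (fst l - a) y"
    using assms layer_nodes_below[OF assms(2)] by (intro comp_eq_pattern_comp) (auto simp: pattern_cell_def)
  then show ?thesis
    by (simp add: preact_def pattern_preact_def)
qed

lemma pattern_cell_eq:
  "pattern_cell c a k =
     {y \<in> vec (d (a - 1)). \<forall>l\<in>layer_nodes a k. has_weak_sign (c l) (pattern_preact c a l y)}"
proof (intro set_eqI iffI)
  fix y assume y: "y \<in> pattern_cell c a k"
  then show "y \<in> {y \<in> vec (d (a - 1)). \<forall>l\<in>layer_nodes a k. has_weak_sign (c l) (pattern_preact c a l y)}"
    using preact_eq_pattern_preact[OF y] by (auto simp: pattern_cell_def)
next
  fix y assume y: "y \<in> {y \<in> vec (d (a - 1)). \<forall>l\<in>layer_nodes a k. has_weak_sign (c l) (pattern_preact c a l y)}"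
  have "preact a l y = pattern_preact c a l y" if "l \<in> layer_nodes a k" for l
  proof -
    have "comp W b d a (fst l - a) y = pattern_comp c a (fst l - a) y"
      using y layer_nodes_below[OF that] by (intro comp_eq_pattern_comp_of_pattern_preact) auto
    then show ?thesis
      by (simp add: preact_def pattern_preact_def)
  qed
  then show "y \<in> pattern_cell c a k"
    using y by (simp add: pattern_cell_def)
qed

lemma affine_map_aff: "affine_map (aff W b d i)"
proof -
  have "aff W b d i (u *\<^sub>R x + v *\<^sub>R y) j = u * aff W b d i x j + v * aff W b d i y j"
    if "u + v = 1" for u v x y j
  proof -
    have "b i j = u * b i j + v * b i j"
      using that by (metis distrib_right mult_1)
    then show ?thesis
      by (simp add: aff_def sum.distrib sum_distrib_left algebra_simps)
  qed
  then show ?thesis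
    by (simp add: affine_map_def fun_eq_iff)
qed

lemma affine_map_pattern_layer: "affine_map (pattern_layer c i)"
  using affine_map_aff[of i] by (auto simp: affine_map_def pattern_layer_def fun_eq_iff)

lemma affine_map_pattern_comp: "affine_map (pattern_comp c a k)"
  by (induction k) (simp_all add: affine_map_id affine_map_compose affine_map_pattern_layer)

lemma affine_map_pattern_preact: "affine_map (pattern_preact c a l)"
  unfolding pattern_preact_def
  by (intro affine_map_apply[where f = "\<lambda>y. aff W b d _ (pattern_comp c a _ y)"]
      affine_map_compose[OF affine_map_aff affine_map_pattern_comp])

lemma continuous_on_aff:
  assumes "\<And>k. continuous_on UNIV (\<lambda>y. f y k :: real)"
  shows "continuous_on UNIV (\<lambda>y. aff W b d i (f y) j)"
  unfolding aff_def using assms by (cases "j < d i") (auto intro!: continuous_intros)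

lemma continuous_on_pattern_comp: "continuous_on UNIV (\<lambda>y. pattern_comp c a k y j)"
proof (induction k arbitrary: j)
  case (Suc k)
  show ?case
    using continuous_on_aff[of "pattern_comp c a k", OF Suc.IH]
    by (cases "c (a + k, j) = 1") (simp_all add: pattern_layer_def)
qed simp

lemma continuous_on_pattern_preact: "continuous_on UNIV (pattern_preact c a l)"
  unfolding pattern_preact_def by (intro continuous_on_aff continuous_on_pattern_comp)

lemma convex_pattern_cell: "convex (pattern_cell c a k)"
proof (rule convexI)
  fix x y and u v :: real
  assume x: "x \<in> pattern_cell c a k" and y: "y \<in> pattern_cell c a k"
    and "0 \<le> u" "0 \<le> v" "u + v = 1"
  have "pattern_preact c a l (u *\<^sub>R x + v *\<^sub>R y) = u * pattern_preact c a l x + v * pattern_preact c a l y"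
    for l
    using affine_mapD[OF affine_map_pattern_preact \<open>u + v = 1\<close>] by simp
  moreover have "u *\<^sub>R x + v *\<^sub>R y \<in> vec (d (a - 1))"
    using x y by (simp add: pattern_cell_def vec_def)
  ultimately show "u *\<^sub>R x + v *\<^sub>R y \<in> pattern_cell c a k"
    using x y \<open>0 \<le> u\<close> \<open>0 \<le> v\<close> by (simp add: pattern_cell_eq has_weak_sign_convex)
qed

lemma preact_affine_on_pattern_cell:
  assumes "x \<in> pattern_cell c a k" "y \<in> pattern_cell c a k" "l \<in> layer_nodes a k"
    and "u + v = 1" "u *\<^sub>R x + v *\<^sub>R y \<in> pattern_cell c a k"
  shows "preact a l (u *\<^sub>R x + v *\<^sub>R y) = u * preact a l x + v * preact a l y"
  using assms
  by (simp add: preact_eq_pattern_preact affine_mapD[OF affine_map_pattern_preact])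

lemma sign_pattern_node [simp]:
  "l \<in> layer_nodes a k \<Longrightarrow> sign_pattern a k y l = int_sgn (preact a l y)"
  by (simp add: sign_pattern_def)

lemma sign_pattern_range: "sign_pattern a k y l \<in> {-1, 0, 1}"
  by (simp add: sign_pattern_def int_sgn_def)

lemma mem_pattern_cell_sign_pattern:
  "y \<in> vec (d (a - 1)) \<Longrightarrow> y \<in> pattern_cell (sign_pattern a k y) a k"
  by (simp add: pattern_cell_def sign_pattern_def)

lemma pattern_cell_sign_pattern_eq:
  assumes "x \<in> pattern_cell c a k"
    and "\<forall>y\<in>pattern_cell c a k. \<forall>l\<in>layer_nodes a k. preact a l x = 0 \<longrightarrow> preact a l y = 0"
  shows "pattern_cell (sign_pattern a k x) a k = pattern_cell c a k"
proof -
  have "has_weak_sign (sign_pattern a k x l) (preact a l y)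
      \<longleftrightarrow> has_weak_sign (c l) (preact a l y) \<and> (preact a l x = 0 \<longrightarrow> preact a l y = 0)"
    if "l \<in> layer_nodes a k" for l y
    using assms(1) that by (simp add: pattern_cell_def has_weak_sign_int_sgn_iff)
  then show ?thesis
    using assms(2) unfolding pattern_cell_def by blast
qed

lemma pattern_cell_sign_pattern_rel_interior:
  assumes x: "x \<in> rel_interior (pattern_cell c a k)"
  shows "pattern_cell (sign_pattern a k x) a k = pattern_cell c a k"
proof (rule pattern_cell_sign_pattern_eq, safe)
  let ?E = "pattern_cell c a k"
  show "x \<in> ?E"
    using x rel_interior_subset by blast
  fix y l assume y: "y \<in> ?E" and l: "l \<in> layer_nodes a k" and "preact a l x = 0"
  obtain t where "t > 0" and z: "(1 + t) *\<^sub>R x + (- t) *\<^sub>R y \<in> ?E"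
    using rel_interior_prolong[OF x y] by (auto simp: algebra_simps)
  have "preact a l ((1 + t) *\<^sub>R x + (- t) *\<^sub>R y) = (1 + t) * preact a l x + (- t) * preact a l y"
    using z by (intro preact_affine_on_pattern_cell[OF \<open>x \<in> ?E\<close> y l]) simp_all
  then have "preact a l ((1 + t) *\<^sub>R x + (- t) *\<^sub>R y) = - t * preact a l y"
    using \<open>preact a l x = 0\<close> by simp
  then show "preact a l y = 0"
    using y z l \<open>t > 0\<close> has_weak_sign_extrapolate_eq_0 by (fastforce simp: pattern_cell_def)
qed

lemma rel_interior_pattern_cell_sign_pattern:
  assumes "y \<in> vec (d (a - 1))"
  shows "y \<in> rel_interior (pattern_cell (sign_pattern a k y) a k)"
proof -
  let ?\<sigma> = "sign_pattern a k y"
  let ?E = "pattern_cell ?\<sigma> a k"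
  let ?p = "pattern_preact ?\<sigma> a"
  define A where "A = {z \<in> vec (d (a - 1)). \<forall>l\<in>layer_nodes a k. ?\<sigma> l = 0 \<longrightarrow> ?p l z = 0}"
  define U where "U = (\<Inter>l\<in>{l \<in> layer_nodes a k. ?\<sigma> l \<noteq> 0}. {z. 0 < real_of_int (?\<sigma> l) * ?p l z})"
  have "y \<in> ?E"
    using assms by (rule mem_pattern_cell_sign_pattern)
  have "affine A"
    unfolding affine_def A_def by (auto simp: affine_mapD[OF affine_map_pattern_preact] vec_def)
  moreover have "?E \<subseteq> A"
    unfolding pattern_cell_eq A_def by (fastforce simp del: sign_pattern_node simp: has_weak_sign_def)
  ultimately have hull: "affine hull ?E \<subseteq> A"
    by (simp add: hull_minimal)
  have "open U"
    unfolding U_def using finite_layer_nodes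
    by (intro open_INT ballI open_Collect_less continuous_on_const continuous_on_mult_left
        continuous_on_pattern_preact) auto
  moreover have "y \<in> U"
    using \<open>y \<in> ?E\<close> by (auto simp: U_def int_sgn_mult_pos preact_eq_pattern_preact[symmetric])
  moreover have "U \<inter> A \<subseteq> ?E"
  proof
    fix z assume z: "z \<in> U \<inter> A"
    have "has_weak_sign (?\<sigma> l) (?p l z)" if l: "l \<in> layer_nodes a k" for l
    proof (cases "?\<sigma> l = 0")
      case True
      then show ?thesis
        using z l by (simp add: A_def del: sign_pattern_node)
    next
      case False
      then have "0 < real_of_int (?\<sigma> l) * ?p l z"
        using z l unfolding U_def by blast
      then show ?thesis
        by (rule has_weak_sign_of_mult_pos[OF sign_pattern_range])
    qed
    then show "z \<in> ?E"
      using z by (simp add: pattern_cell_eq A_def)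
  qed
  ultimately show ?thesis
    using \<open>y \<in> ?E\<close> hull unfolding rel_interior by blast
qed

lemma preact_midpoint_eq_0_iff:
  assumes "x \<in> pattern_cell c a k" "y \<in> pattern_cell c a k" "l \<in> layer_nodes a k"
  shows "preact a l ((1/2) *\<^sub>R x + (1/2) *\<^sub>R y) = 0 \<longleftrightarrow> preact a l x = 0 \<and> preact a l y = 0"
proof -
  have "(1/2) *\<^sub>R x + (1/2) *\<^sub>R y \<in> pattern_cell c a k"
    by (rule convexD[OF convex_pattern_cell assms(1,2)]) auto
  then have "preact a l ((1/2) *\<^sub>R x + (1/2) *\<^sub>R y) = preact a l x / 2 + preact a l y / 2"
    using preact_affine_on_pattern_cell[OF assms] by simp
  moreover have "has_weak_sign (c l) (preact a l x)" "has_weak_sign (c l) (preact a l y)"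
    using assms by (auto simp: pattern_cell_def)
  ultimately show ?thesis
    using has_weak_sign_midpoint_eq_0[of "c l" "preact a l x" "preact a l y"] by auto
qed

text \<open>A point of the cell with the most non-vanishing pre-activations has the sign pattern
  of the whole cell: by the midpoint argument, every point of the cell vanishes wherever it does.\<close>
lemma exists_sign_pattern_eq:
  assumes "pattern_cell c a k \<noteq> {}"
  obtains x where "x \<in> pattern_cell c a k" "pattern_cell (sign_pattern a k x) a k = pattern_cell c a k"
proof -
  let ?E = "pattern_cell c a k"
  define support where "support x = {l \<in> layer_nodes a k. preact a l x \<noteq> 0}" for x
  have sub: "support x \<subseteq> layer_nodes a k" for x
    by (auto simp: support_def)
  have fin: "finite (support x)" for x
    using finite_subset[OF sub finite_layer_nodes] .
  have bound: "card (support x) < card (layer_nodes a k) + 1" for x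
    using card_mono[OF finite_layer_nodes sub[of x]] by linarith
  obtain x0 where "x0 \<in> ?E"
    using assms by blast
  then have "\<exists>x. x \<in> ?E \<and> (\<forall>y. y \<in> ?E \<longrightarrow> card (support y) \<le> card (support x))"
    using bound by (intro ex_has_greatest_nat[where P = "\<lambda>x. x \<in> ?E" and f = "\<lambda>x. card (support x)"
        and b = "card (layer_nodes a k) + 1", OF \<open>x0 \<in> ?E\<close>]) simp
  then obtain x where x: "x \<in> ?E" and max: "\<forall>y. y \<in> ?E \<longrightarrow> card (support y) \<le> card (support x)"
    by blast
  have "preact a l y = 0" if y: "y \<in> ?E" and l: "l \<in> layer_nodes a k" and "preact a l x = 0" for y l
  proof (rule ccontr)
    assume "preact a l y \<noteq> 0"
    let ?z = "(1/2) *\<^sub>R x + (1/2) *\<^sub>R y"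
    have "support x \<subseteq> support ?z"
      using preact_midpoint_eq_0_iff[OF x y] by (auto simp: support_def)
    moreover have "l \<in> support ?z" "l \<notin> support x"
      using preact_midpoint_eq_0_iff[OF x y l] l \<open>preact a l x = 0\<close> \<open>preact a l y \<noteq> 0\<close>
      by (simp_all add: support_def)
    ultimately have "support x \<subset> support ?z"
      by blast
    then have "card (support x) < card (support ?z)"
      by (rule psubset_card_mono[OF fin])
    moreover have "?z \<in> ?E"
      by (rule convexD[OF convex_pattern_cell x y]) auto
    then have "card (support ?z) \<le> card (support x)"
      using max by blast
    ultimately show False
      by linarith
  qed
  then show ?thesis
    using that x pattern_cell_sign_pattern_eq by blast
qed

lemma comp_in_vec: "y \<in> vec (d (a - 1)) \<Longrightarrow> comp W b d a k y \<in> vec (d (a + k - 1))"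
  by (cases k) (auto simp: vec_def layer_def aff_def)

lemma pattern_cell_Suc:
  "pattern_cell c a (Suc k) = {y \<in> pattern_cell c a k.
     \<forall>j<d (a + k). has_weak_sign (c (a + k, j)) (aff W b d (a + k) (comp W b d a k y) j)}"
  by (auto simp: pattern_cell_def ball_layer_nodes_Suc preact_last)

lemma pattern_cell_cong: "\<forall>l\<in>layer_nodes a k. c l = c' l \<Longrightarrow> pattern_cell c a k = pattern_cell c' a k"
  by (simp add: pattern_cell_def)

definition arrangement_cell :: "nat \<Rightarrow> (nat \<Rightarrow> int) \<Rightarrow> (nat \<Rightarrow> real) set" where
  "arrangement_cell i c' = {z \<in> vec (d (i - 1)). \<forall>j<d i.
     (c' j = 1 \<longrightarrow> aff W b d i z j \<ge> 0) \<and> (c' j = -1 \<longrightarrow> aff W b d i z j \<le> 0) \<and>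
     (c' j = 0 \<longrightarrow> aff W b d i z j = 0)}"

lemma Rcx_eq: "Rcx W b d i = {R. R \<noteq> {} \<and> (\<exists>c'. (\<forall>j<d i. c' j \<in> {-1, 0, 1}) \<and> R = arrangement_cell i c')}"
  by (simp add: Rcx_def arrangement_cell_def)

lemma pattern_cell_Suc_range:
  assumes "y \<in> pattern_cell c a (Suc k)"
  shows "\<forall>j<d (a + k). c (a + k, j) \<in> {-1, 0, 1}"
proof (intro allI impI)
  fix j assume "j < d (a + k)"
  then have "has_weak_sign (c (a + k, j)) (aff W b d (a + k) (comp W b d a k y) j)"
    using assms by (simp add: pattern_cell_Suc)
  then show "c (a + k, j) \<in> {-1, 0, 1}"
    by (rule has_weak_sign_range)
qed

lemma pattern_cell_Suc_eq_cut:
  assumes range: "\<forall>j<d (a + k). c (a + k, j) \<in> {-1, 0, 1}"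
  shows "pattern_cell c a (Suc k) =
    pattern_cell c a k \<inter> {x \<in> vec (d (a - 1)). comp W b d a k x \<in> arrangement_cell (a + k) (\<lambda>j. c (a + k, j))}"
proof -
  have "has_weak_sign (c (a + k, j)) v \<longleftrightarrow>
      (c (a + k, j) = 1 \<longrightarrow> 0 \<le> v) \<and> (c (a + k, j) = -1 \<longrightarrow> v \<le> 0) \<and> (c (a + k, j) = 0 \<longrightarrow> v = 0)"
    if "j < d (a + k)" for j v
    using range that by (simp add: has_weak_sign_iff)
  moreover have "y \<in> vec (d (a - 1))" "comp W b d a k y \<in> vec (d (a + k - 1))"
    if "y \<in> pattern_cell c a k" for y
    using subsetD[OF pattern_cell_subset_vec that] comp_in_vec by auto
  ultimately show ?thesis
    unfolding pattern_cell_Suc arrangement_cell_def by blast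
qed

lemma canon_eq_pattern_cells: "canon W b d a k = {E. E \<noteq> {} \<and> (\<exists>c. E = pattern_cell c a k)}"
proof (induction k)
  case 0
  have "0 \<in> vec (d (a - 1))"
    by (simp add: vec_def)
  then show ?case
    by (auto simp: pattern_cell_def layer_nodes_def)
next
  case (Suc k)
  show ?case
  proof (intro set_eqI iffI)
    fix E assume "E \<in> canon W b d a (Suc k)"
    then obtain C R where "E \<noteq> {}" "C \<in> canon W b d a k" "R \<in> Rcx W b d (a + k)"
      and E: "E = C \<inter> {x \<in> vec (d (a - 1)). comp W b d a k x \<in> R}"
      by auto
    then obtain c c' where C: "C = pattern_cell c a k" and c': "\<forall>j<d (a + k). c' j \<in> {-1, 0, 1}"
      and R: "R = arrangement_cell (a + k) c'"
      unfolding Suc.IH Rcx_eq by blast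
    define c'' where "c'' l = (if fst l = a + k then c' (snd l) else c l)" for l
    have "pattern_cell c'' a k = pattern_cell c a k"
      by (rule pattern_cell_cong) (auto simp: c''_def layer_nodes_def)
    moreover have "\<forall>j<d (a + k). c'' (a + k, j) \<in> {-1, 0, 1}" "(\<lambda>j. c'' (a + k, j)) = c'"
      using c' by (simp_all add: c''_def)
    ultimately have "E = pattern_cell c'' a (Suc k)"
      using pattern_cell_Suc_eq_cut[of a k c''] by (simp add: E C R)
    then show "E \<in> {E. E \<noteq> {} \<and> (\<exists>c. E = pattern_cell c a (Suc k))}"
      using \<open>E \<noteq> {}\<close> by blast
  next
    fix E assume "E \<in> {E. E \<noteq> {} \<and> (\<exists>c. E = pattern_cell c a (Suc k))}"
    then obtain c y where E: "E = pattern_cell c a (Suc k)" and "y \<in> E"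
      by blast
    then have range: "\<forall>j<d (a + k). c (a + k, j) \<in> {-1, 0, 1}"
      using pattern_cell_Suc_range by blast
    have cut: "E = pattern_cell c a k \<inter>
        {x \<in> vec (d (a - 1)). comp W b d a k x \<in> arrangement_cell (a + k) (\<lambda>j. c (a + k, j))}"
      using pattern_cell_Suc_eq_cut[OF range] by (simp add: E)
    then have "pattern_cell c a k \<in> canon W b d a k"
      using \<open>y \<in> E\<close> unfolding Suc.IH by blast
    moreover have "comp W b d a k y \<in> arrangement_cell (a + k) (\<lambda>j. c (a + k, j))"
      using cut \<open>y \<in> E\<close> by blast
    then have "arrangement_cell (a + k) (\<lambda>j. c (a + k, j)) \<in> Rcx W b d (a + k)"
      unfolding Rcx_eq mem_Collect_eq using range by (intro conjI exI[of _ "\<lambda>j. c (a + k, j)"]) auto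
    ultimately show "E \<in> canon W b d a (Suc k)"
      using cut \<open>y \<in> E\<close> unfolding canon.simps by blast
  qed
qed

lemma canon_one: "canon W b d a 1 = Rcx W b d a"
proof -
  have cut: "vec (d (a - 1)) \<inter> {x \<in> vec (d (a - 1)). x \<in> R} = R" and nonempty: "R \<noteq> {}"
    if "R \<in> Rcx W b d a" for R
    using that by (auto simp: Rcx_def)
  have "canon W b d a 1 =
      {E. E \<noteq> {} \<and> (\<exists>R\<in>Rcx W b d a. E = vec (d (a - 1)) \<inter> {x \<in> vec (d (a - 1)). x \<in> R})}"
    by simp
  also have "\<dots> = Rcx W b d a"
  proof (intro set_eqI iffI)
    fix E assume "E \<in> Rcx W b d a"
    then show "E \<in> {E. E \<noteq> {} \<and> (\<exists>R\<in>Rcx W b d a. E = vec (d (a - 1)) \<inter> {x \<in> vec (d (a - 1)). x \<in> R})}"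
      using cut nonempty by blast
  qed (use cut in auto)
  finally show ?thesis .
qed

section \<open>Dimension of the cells\<close>

definition aff_lin :: "nat \<Rightarrow> nat \<Rightarrow> (nat \<Rightarrow> real) \<Rightarrow> real" where
  "aff_lin i j v = aff W b d i v j - aff W b d i 0 j"

lemma linear_aff_lin: "linear (aff_lin i j)"
  unfolding aff_lin_def by (rule linear_affine_map_diff[OF affine_map_apply[OF affine_map_aff]])

lemma aff_add: "aff W b d i (x + v) j = aff W b d i x j + aff_lin i j v"
  using linear_add[OF linear_aff_lin, of i j x v] by (simp add: aff_lin_def)

lemma diffs_hyperplane_intersection:
  assumes x: "x \<in> vec (d (i - 1))" "\<forall>j\<in>J. aff W b d i x j = 0"
  defines "S \<equiv> vec (d (i - 1)) \<inter> (\<Inter>j\<in>J. hyp W b d i j)"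
  shows "{p - q | p q. p \<in> S \<and> q \<in> S} = {v \<in> vec (d (i - 1)). \<forall>j\<in>J. aff_lin i j v = 0}"
proof (intro set_eqI iffI)
  fix v assume "v \<in> {p - q | p q. p \<in> S \<and> q \<in> S}"
  then obtain p q where "v = p - q" "p \<in> S" "q \<in> S"
    by blast
  moreover have "aff_lin i j (p - q) = 0" if "j \<in> J" for j
  proof -
    have "aff W b d i p j = 0" "aff W b d i q j = 0"
      using \<open>p \<in> S\<close> \<open>q \<in> S\<close> that by (auto simp: S_def hyp_def)
    then show ?thesis
      using linear_diff[OF linear_aff_lin, of i j p q] by (simp add: aff_lin_def)
  qed
  moreover have "p - q \<in> vec (d (i - 1))"
    using \<open>p \<in> S\<close> \<open>q \<in> S\<close> by (auto simp: S_def vec_def)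
  ultimately show "v \<in> {v \<in> vec (d (i - 1)). \<forall>j\<in>J. aff_lin i j v = 0}"
    by blast
next
  fix v assume v: "v \<in> {v \<in> vec (d (i - 1)). \<forall>j\<in>J. aff_lin i j v = 0}"
  then have "x + v \<in> S"
    using x by (auto simp: S_def hyp_def aff_add vec_def)
  moreover have "x \<in> S"
    using x by (auto simp: S_def hyp_def)
  ultimately have "(x + v) - x \<in> {p - q | p q. p \<in> S \<and> q \<in> S}"
    by blast
  then show "v \<in> {p - q | p q. p \<in> S \<and> q \<in> S}"
    by simp
qed

lemma dim_kernel_aff_lin_generic:
  assumes gen: "generic W b d m" "1 \<le> i" "i \<le> m + 1" and x: "x \<in> vec (d (i - 1))"
    and J: "J \<subseteq> {j. j < d i \<and> aff W b d i x j = 0}"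
  shows "card J \<le> d (i - 1)" "dim {v \<in> vec (d (i - 1)). \<forall>j\<in>J. aff_lin i j v = 0} = d (i - 1) - card J"
proof -
  define S where "S = vec (d (i - 1)) \<inter> (\<Inter>j\<in>J. hyp W b d i j)"
  have "x \<in> S"
    using x J by (auto simp: S_def hyp_def)
  moreover have "J \<subseteq> {..<d i}"
    using J by auto
  then have "if card J \<le> d (i - 1) then S \<noteq> {} \<and> adim S = d (i - 1) - card J else S = {}"
    using gen unfolding generic_def Let_def S_def by blast
  ultimately have "card J \<le> d (i - 1)" "adim S = d (i - 1) - card J"
    by (auto split: if_splits)
  moreover have "{p - q | p q. p \<in> S \<and> q \<in> S} = {v \<in> vec (d (i - 1)). \<forall>j\<in>J. aff_lin i j v = 0}"
    using diffs_hyperplane_intersection[OF x, of J] J by (simp add: S_def subset_iff)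
  ultimately show "card J \<le> d (i - 1)" "dim {v \<in> vec (d (i - 1)). \<forall>j\<in>J. aff_lin i j v = 0} = d (i - 1) - card J"
    by (simp_all add: adim_def)
qed

text \<open>A linear relation among the normals of the hyperplanes through \<open>x\<close> would let one of
  them be dropped without changing their intersection, against the dimension count.\<close>
lemma independent_functionals_aff_lin:
  assumes gen: "generic W b d m" "1 \<le> i" "i \<le> m + 1" and x: "x \<in> vec (d (i - 1))"
  shows "independent_functionals (vec (d (i - 1))) (aff_lin i) {j. j < d i \<and> aff W b d i x j = 0}"
  unfolding independent_functionals_def
proof (intro allI impI ballI, rule ccontr)
  define J where "J = {j. j < d i \<and> aff W b d i x j = 0}"
  define K where "K J' = {v \<in> vec (d (i - 1)). \<forall>j\<in>J'. aff_lin i j v = 0}" for J'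
  fix \<alpha> j\<^sub>0 assume H: "\<forall>v\<in>vec (d (i - 1)). (\<Sum>j\<in>J. \<alpha> j * aff_lin i j v) = 0"
    and "j\<^sub>0 \<in> J" "\<alpha> j\<^sub>0 \<noteq> 0"
  have "finite J"
    by (simp add: J_def)
  have "K (J - {j\<^sub>0}) \<subseteq> K J"
  proof
    fix v assume v: "v \<in> K (J - {j\<^sub>0})"
    have "\<alpha> j\<^sub>0 * aff_lin i j\<^sub>0 v = (\<Sum>j\<in>J. \<alpha> j * aff_lin i j v)"
      using v sum.remove[OF \<open>finite J\<close> \<open>j\<^sub>0 \<in> J\<close>, of "\<lambda>j. \<alpha> j * aff_lin i j v"] by (simp add: K_def)
    then have "aff_lin i j\<^sub>0 v = 0"
      using H v \<open>\<alpha> j\<^sub>0 \<noteq> 0\<close> by (simp add: K_def)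
    then show "v \<in> K J"
      using v by (auto simp: K_def)
  qed
  then have "K J = K (J - {j\<^sub>0})"
    by (auto simp: K_def)
  moreover have "card (J - {j\<^sub>0}) = card J - 1" "card J \<ge> 1"
    using \<open>finite J\<close> \<open>j\<^sub>0 \<in> J\<close> by (auto simp: card_gt_0_iff Suc_le_eq)
  ultimately show False
    using dim_kernel_aff_lin_generic[OF gen x, of J] dim_kernel_aff_lin_generic[OF gen x, of "J - {j\<^sub>0}"]
    by (auto simp: K_def J_def)
qed

definition zero_nodes :: "nat \<Rightarrow> nat \<Rightarrow> (nat \<Rightarrow> real) \<Rightarrow> (nat \<times> nat) set" where
  "zero_nodes a k x = {l \<in> layer_nodes a k. preact a l x = 0}"

definition preact_lin :: "(nat \<times> nat \<Rightarrow> int) \<Rightarrow> nat \<Rightarrow> nat \<times> nat \<Rightarrow> (nat \<Rightarrow> real) \<Rightarrow> real" where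
  "preact_lin c a l v = pattern_preact c a l v - pattern_preact c a l 0"

lemma linear_preact_lin: "linear (preact_lin c a l)"
  unfolding preact_lin_def by (rule linear_affine_map_diff[OF affine_map_pattern_preact])

lemma linear_sum_preact_lin: "linear (\<lambda>v. \<Sum>l\<in>L. \<alpha> l * preact_lin c a l v)"
  using linear_compose_sum[of L "\<lambda>l v. \<alpha> l *\<^sub>R preact_lin c a l v"]
    linear_compose_scale_right[OF linear_preact_lin] by simp

lemma preact_lin_first: "preact_lin c a (a, j) = aff_lin a j"
  by (simp add: fun_eq_iff preact_lin_def pattern_preact_def aff_lin_def)

lemma preact_lin_eq_0_on_cell:
  assumes "l \<in> layer_nodes a k" "c l = 0" "z \<in> pattern_cell c a k" "w \<in> pattern_cell c a k"
  shows "preact_lin c a l (z - w) = 0"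
proof -
  have "pattern_preact c a l u = 0" if "u \<in> pattern_cell c a k" for u
  proof -
    have "has_weak_sign (c l) (preact a l u)"
      using that assms(1) by (simp add: pattern_cell_def)
    then show ?thesis
      using assms(2) preact_eq_pattern_preact[OF that assms(1)] by (simp add: has_weak_sign_def)
  qed
  then show ?thesis
    using linear_diff[OF linear_preact_lin, of c a l z w] assms(3,4) by (simp add: preact_lin_def)
qed

lemma comp_Suc_shift: "comp W b d a (Suc n) x = comp W b d (Suc a) n (layer W b d a x)"
  by (induction n) auto

lemma pattern_comp_Suc_shift: "pattern_comp c a (Suc n) x = pattern_comp c (Suc a) n (pattern_layer c a x)"
  by (induction n) auto

lemma pattern_comp_cong: "\<forall>l\<in>layer_nodes a n. c l = c' l \<Longrightarrow> pattern_comp c a n = pattern_comp c' a n"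
proof (induction n)
  case (Suc n)
  then have "pattern_comp c a n = pattern_comp c' a n"
    by (simp add: ball_layer_nodes_Suc)
  moreover have "pattern_layer c (a + n) = pattern_layer c' (a + n)"
    using Suc.prems by (auto simp: ball_layer_nodes_Suc pattern_layer_def aff_def fun_eq_iff)
  ultimately show ?case
    by simp
qed (simp add: fun_eq_iff)

lemma layer_nodes_SucD: "l \<in> layer_nodes (Suc a) k \<Longrightarrow> fst l - a = Suc (fst l - Suc a)"
  by (auto simp: layer_nodes_def)

lemma preact_shift:
  assumes "l \<in> layer_nodes (Suc a) k"
  shows "preact a l x = preact (Suc a) l (layer W b d a x)"
proof -
  have "comp W b d a (fst l - a) x = comp W b d (Suc a) (fst l - Suc a) (layer W b d a x)"
    unfolding layer_nodes_SucD[OF assms] by (rule comp_Suc_shift)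
  then show ?thesis
    by (simp add: preact_def)
qed

lemma sign_pattern_shift:
  assumes "l \<in> layer_nodes (Suc a) k"
  shows "sign_pattern a (Suc k) x l = sign_pattern (Suc a) k (layer W b d a x) l"
proof -
  have "l \<in> layer_nodes a (Suc k)"
    using assms by (auto simp: layer_nodes_def)
  then show ?thesis
    using assms by (simp add: preact_shift)
qed

lemma zero_nodes_Suc:
  "zero_nodes a (Suc k) x =
     Pair a ` {j. j < d a \<and> aff W b d a x j = 0} \<union> zero_nodes (Suc a) k (layer W b d a x)"
  by (auto simp: zero_nodes_def layer_nodes_Suc_first preact_shift)

lemma preact_lin_shift:
  assumes "l \<in> layer_nodes (Suc a) k" "\<forall>l\<in>layer_nodes (Suc a) k. c l = c' l"
  shows "preact_lin c a l v = preact_lin c' (Suc a) l (pattern_layer c a v - pattern_layer c a 0)"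
proof -
  have agree: "\<forall>l'\<in>layer_nodes (Suc a) (fst l - Suc a). c l' = c' l'"
    using assms by (auto simp: layer_nodes_def)
  have "pattern_comp c a (fst l - a) u = pattern_comp c' (Suc a) (fst l - Suc a) (pattern_layer c a u)"
    for u
    unfolding layer_nodes_SucD[OF assms(1)] pattern_comp_Suc_shift pattern_comp_cong[OF agree] ..
  then have "pattern_preact c a l u = pattern_preact c' (Suc a) l (pattern_layer c a u)" for u
    by (simp add: pattern_preact_def)
  then show ?thesis
    using linear_diff[OF linear_preact_lin, of c' "Suc a" l] by (simp add: preact_lin_def)
qed

lemma first_layer_sign_cell:
  assumes "x \<in> vec (d (a - 1))"
  shows "x \<in> rel_interior (pattern_cell (sign_pattern a (Suc k) x) a 1)"
    and "pattern_cell (sign_pattern a (Suc k) x) a 1 \<in> Rcx W b d a"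
proof -
  have "\<forall>l\<in>layer_nodes a 1. sign_pattern a (Suc k) x l = sign_pattern a 1 x l"
    by (auto simp: layer_nodes_def)
  then have eq: "pattern_cell (sign_pattern a (Suc k) x) a 1 = pattern_cell (sign_pattern a 1 x) a 1"
    by (rule pattern_cell_cong)
  then show "x \<in> rel_interior (pattern_cell (sign_pattern a (Suc k) x) a 1)"
    using rel_interior_pattern_cell_sign_pattern[OF assms] by simp
  have "x \<in> pattern_cell (sign_pattern a 1 x) a 1"
    using assms by (rule mem_pattern_cell_sign_pattern)
  then show "pattern_cell (sign_pattern a (Suc k) x) a 1 \<in> Rcx W b d a"
    unfolding eq canon_one[symmetric] canon_eq_pattern_cells by blast
qed

lemma layer_eq_pattern_layer_on_cell:
  "z \<in> pattern_cell c a k \<Longrightarrow> 0 < k \<Longrightarrow> layer W b d a z = pattern_layer c a z"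
  using comp_eq_pattern_comp[of a 1 c z] layer_nodes_mono[of 1 k a]
  by (auto simp: pattern_cell_def)

lemma pattern_preact_line:
  "pattern_preact c a l (x + t *\<^sub>R v) = pattern_preact c a l x + t * preact_lin c a l v"
  using affine_map_line[OF affine_map_pattern_preact] by (simp add: preact_lin_def)

lemma exists_perturbation_in_sign_cell:
  assumes x: "x \<in> vec (d (a - 1))" and v: "v \<in> vec (d (a - 1))"
    and ker: "\<forall>l\<in>zero_nodes a k x. preact_lin (sign_pattern a k x) a l v = 0"
  obtains t where "0 < t" "x + t *\<^sub>R v \<in> pattern_cell (sign_pattern a k x) a k"
proof -
  let ?\<sigma> = "sign_pattern a k x"
  have "x \<in> pattern_cell ?\<sigma> a k"
    using x by (rule mem_pattern_cell_sign_pattern)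
  obtain t where "0 < t" and t: "\<forall>l\<in>layer_nodes a k. pattern_preact ?\<sigma> a l x \<noteq> 0 \<longrightarrow>
      t \<le> \<bar>pattern_preact ?\<sigma> a l x\<bar> / (\<bar>preact_lin ?\<sigma> a l v\<bar> + 1)"
    using exists_small_step[OF finite_layer_nodes, where g = "\<lambda>l. pattern_preact ?\<sigma> a l x"
        and p = "\<lambda>l. preact_lin ?\<sigma> a l v"] by blast
  have "has_weak_sign (?\<sigma> l) (pattern_preact ?\<sigma> a l (x + t *\<^sub>R v))" if l: "l \<in> layer_nodes a k" for l
  proof -
    have px: "pattern_preact ?\<sigma> a l x = preact a l x"
      using preact_eq_pattern_preact[OF \<open>x \<in> pattern_cell ?\<sigma> a k\<close> l] by simp
    have \<sigma>: "?\<sigma> l = int_sgn (preact a l x)"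
      using l by simp
    show ?thesis
    proof (cases "preact a l x = 0")
      case True
      then have "preact_lin ?\<sigma> a l v = 0"
        using ker l unfolding zero_nodes_def by blast
      then show ?thesis
        using True px \<sigma> by (simp add: pattern_preact_line)
    next
      case False
      then have "t \<le> \<bar>preact a l x\<bar> / (\<bar>preact_lin ?\<sigma> a l v\<bar> + 1)"
        using bspec[OF t l] px by simp
      from has_weak_sign_perturb[OF False \<open>0 < t\<close> this]
      show ?thesis
        using px \<sigma> by (simp add: pattern_preact_line)
    qed
  qed
  moreover have "x + t *\<^sub>R v \<in> vec (d (a - 1))"
    using x v by (simp add: vec_def)
  ultimately have "x + t *\<^sub>R v \<in> pattern_cell ?\<sigma> a k"
    by (simp add: pattern_cell_eq)
  with \<open>0 < t\<close> show ?thesis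
    by (rule that)
qed

lemma span_diffs_pattern_cell:
  assumes x: "x \<in> rel_interior (pattern_cell c a k)"
  shows "span {p - q | p q. p \<in> pattern_cell c a k \<and> q \<in> pattern_cell c a k}
    = {v \<in> vec (d (a - 1)). \<forall>l\<in>zero_nodes a k x. preact_lin (sign_pattern a k x) a l v = 0}"
    (is "span ?S = ?K")
proof -
  let ?\<sigma> = "sign_pattern a k x"
  let ?E = "pattern_cell ?\<sigma> a k"
  have E: "pattern_cell c a k = ?E"
    using pattern_cell_sign_pattern_rel_interior[OF x] by simp
  have "x \<in> ?E"
    using x rel_interior_subset E by blast
  then have "x \<in> vec (d (a - 1))"
    using pattern_cell_subset_vec by blast
  have subspace: "subspace ?K"
    using subspace_common_kernel[OF subspace_vec, of "zero_nodes a k x" "preact_lin ?\<sigma> a"] linear_preact_lin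
    by simp
  have S_K: "?S \<subseteq> ?K"
  proof
    fix v assume "v \<in> ?S"
    then obtain p q where "v = p - q" "p \<in> ?E" "q \<in> ?E"
      unfolding E by blast
    moreover have "p \<in> vec (d (a - 1))" "q \<in> vec (d (a - 1))"
      using calculation(2,3) pattern_cell_subset_vec by blast+
    moreover have "preact_lin ?\<sigma> a l (p - q) = 0" if "l \<in> zero_nodes a k x" for l
      using preact_lin_eq_0_on_cell[of l a k ?\<sigma> p q] that calculation(2,3) by (simp add: zero_nodes_def)
    ultimately show "v \<in> ?K"
      by (simp add: vec_def)
  qed
  have "?K \<subseteq> span ?S"
  proof
    fix v assume "v \<in> ?K"
    then obtain t where "0 < t" "x + t *\<^sub>R v \<in> ?E"
      using exists_perturbation_in_sign_cell[OF \<open>x \<in> vec (d (a - 1))\<close>] by blast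
    then have "(x + t *\<^sub>R v) - x \<in> ?S"
      using \<open>x \<in> ?E\<close> unfolding E by blast
    then have "(1 / t) *\<^sub>R ((x + t *\<^sub>R v) - x) \<in> span ?S"
      by (intro span_scale span_base)
    moreover have "(1 / t) *\<^sub>R ((x + t *\<^sub>R v) - x) = v"
      using \<open>0 < t\<close> by simp
    ultimately show "v \<in> span ?S"
      by (simp only:)
  qed
  then show ?thesis
    by (rule span_subspace[OF S_K _ subspace])
qed

lemma rel_interior_canon_nonempty:
  assumes "E \<in> canon W b d a k"
  shows "rel_interior E \<noteq> {}"
proof -
  obtain c where E: "E = pattern_cell c a k" and "E \<noteq> {}"
    using assms by (auto simp: canon_eq_pattern_cells)
  then obtain x where "x \<in> E" and x: "pattern_cell (sign_pattern a k x) a k = E"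
    using exists_sign_pattern_eq[of c a k] by blast
  then have "x \<in> vec (d (a - 1))"
    using E pattern_cell_subset_vec by blast
  then have "x \<in> rel_interior E"
    using rel_interior_pattern_cell_sign_pattern[of x a k] x by simp
  then show ?thesis
    by blast
qed

lemma sum_zero_nodes_Suc:
  fixes a k :: nat and x :: "nat \<Rightarrow> real"
  defines "\<sigma> \<equiv> sign_pattern a (Suc k) x" and "y \<equiv> layer W b d a x"
  shows "(\<Sum>l\<in>zero_nodes a (Suc k) x. \<alpha> l * preact_lin \<sigma> a l v) =
    (\<Sum>j | j < d a \<and> aff W b d a x j = 0. \<alpha> (a, j) * aff_lin a j v) +
    (\<Sum>l\<in>zero_nodes (Suc a) k y.
       \<alpha> l * preact_lin (sign_pattern (Suc a) k y) (Suc a) l (pattern_layer \<sigma> a v - pattern_layer \<sigma> a 0))"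
proof -
  let ?J = "{j. j < d a \<and> aff W b d a x j = 0}"
  let ?Z = "zero_nodes (Suc a) k y"
  have Z: "?Z \<subseteq> layer_nodes (Suc a) k"
    by (auto simp: zero_nodes_def)
  then have "finite ?Z" "Pair a ` ?J \<inter> ?Z = {}"
    using finite_subset[OF Z finite_layer_nodes] by (auto simp: layer_nodes_def)
  then have "(\<Sum>l\<in>zero_nodes a (Suc k) x. \<alpha> l * preact_lin \<sigma> a l v) =
      (\<Sum>l\<in>Pair a ` ?J. \<alpha> l * preact_lin \<sigma> a l v) + (\<Sum>l\<in>?Z. \<alpha> l * preact_lin \<sigma> a l v)"
    by (simp add: zero_nodes_Suc y_def sum.union_disjoint)
  moreover have "(\<Sum>l\<in>Pair a ` ?J. \<alpha> l * preact_lin \<sigma> a l v) = (\<Sum>j\<in>?J. \<alpha> (a, j) * aff_lin a j v)"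
    by (simp add: sum.reindex inj_on_def preact_lin_first)
  moreover have "preact_lin \<sigma> a l v =
      preact_lin (sign_pattern (Suc a) k y) (Suc a) l (pattern_layer \<sigma> a v - pattern_layer \<sigma> a 0)"
    if "l \<in> ?Z" for l
    using that Z preact_lin_shift[of l a k \<sigma>] sign_pattern_shift by (auto simp: \<sigma>_def y_def)
  ultimately show ?thesis
    by simp
qed

lemma first_layer_cell_diff:
  assumes "z \<in> pattern_cell (sign_pattern a (Suc k) x) a 1" "x \<in> vec (d (a - 1))"
  defines "\<sigma> \<equiv> sign_pattern a (Suc k) x"
  shows "layer W b d a z - layer W b d a x = pattern_layer \<sigma> a (z - x) - pattern_layer \<sigma> a 0"
    and "z - x \<in> vec (d (a - 1))"
    and "j < d a \<Longrightarrow> aff W b d a x j = 0 \<Longrightarrow> aff_lin a j (z - x) = 0"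
proof -
  have "x \<in> pattern_cell \<sigma> a 1"
    using first_layer_sign_cell(1)[OF assms(2)] rel_interior_subset by (auto simp: \<sigma>_def)
  then show "layer W b d a z - layer W b d a x = pattern_layer \<sigma> a (z - x) - pattern_layer \<sigma> a 0"
    using layer_eq_pattern_layer_on_cell[of _ \<sigma> a 1] assms(1)
      linear_diff[OF linear_affine_map_diff[OF affine_map_pattern_layer], of \<sigma> a z x]
    by (simp add: \<sigma>_def)
  show "z - x \<in> vec (d (a - 1))"
    using assms(1,2) pattern_cell_subset_vec by (fastforce simp: vec_def)
  assume "j < d a" "aff W b d a x j = 0"
  then have "(a, j) \<in> layer_nodes a 1" "\<sigma> (a, j) = 0"
    by (simp_all add: \<sigma>_def layer_nodes_def)
  then have "aff W b d a z j = 0"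
    using assms(1) unfolding \<sigma>_def pattern_cell_def has_weak_sign_def by fastforce
  then show "aff_lin a j (z - x) = 0"
    using \<open>aff W b d a x j = 0\<close> linear_diff[OF linear_aff_lin, of a j z x] by (simp add: aff_lin_def)
qed

lemma transversality_step:
  fixes \<psi> :: "(nat \<Rightarrow> real) \<Rightarrow> real"
  assumes st: "supertransversal W b d m" and a: "1 \<le> a" "a \<le> m" "a + Suc k = m + 2"
    and x: "x \<in> vec (d (a - 1))" and "linear \<psi>"
  defines "C \<equiv> pattern_cell (sign_pattern a (Suc k) x) a 1"
    and "D \<equiv> pattern_cell (sign_pattern (Suc a) k (layer W b d a x)) (Suc a) k"
  assumes first: "\<forall>z\<in>C. \<psi> (layer W b d a z - layer W b d a x) = 0"
    and rest: "\<forall>z\<in>D. \<forall>w\<in>D. \<psi> (z - w) = 0"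
  shows "\<forall>v\<in>vec (d a). \<psi> v = 0"
proof -
  have y: "layer W b d a x \<in> vec (d a)"
    by (simp add: vec_def layer_def aff_def)
  have "m + 1 - a = k"
    using a by simp
  then have "D \<in> canon W b d (a + 1) (m + 1 - a)"
    using mem_pattern_cell_sign_pattern[of _ "Suc a" k] y unfolding canon_eq_pattern_cells by (auto simp: D_def)
  moreover have "C \<in> Rcx W b d a"
    using first_layer_sign_cell(2)[OF x] by (simp add: C_def)
  ultimately have "transverse_on (layer W b d a) C D (d a)"
    using st a unfolding supertransversal_def by blast
  moreover have "x \<in> rel_interior C"
    using first_layer_sign_cell(1)[OF x] by (simp add: C_def)
  moreover have "layer W b d a x \<in> rel_interior D"
    using rel_interior_pattern_cell_sign_pattern[of _ "Suc a" k] y by (simp add: D_def)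
  ultimately show ?thesis
    using \<open>linear \<psi>\<close> first rest by (rule transverse_on_vanishing_functional)
qed

text \<open>A relation among the zero-node functionals restricts, on the
  tangent space of the first-layer cell, to a relation among the functionals of the later layers;
  transversality spreads it to the whole input space of the next layer, where the induction
  hypothesis kills it, and genericity of the first layer kills what is left.\<close>
lemma independent_functionals_zero_nodes:
  assumes gen: "generic W b d m" and st: "supertransversal W b d m"
  shows "a + k = m + 2 \<Longrightarrow> 1 \<le> a \<Longrightarrow> x \<in> vec (d (a - 1)) \<Longrightarrow>
    independent_functionals (vec (d (a - 1))) (preact_lin (sign_pattern a k x) a) (zero_nodes a k x)"
proof (induction k arbitrary: a x)
  case 0
  then show ?case
    by (simp add: independent_functionals_def zero_nodes_def layer_nodes_def)
next
  case (Suc k)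
  define \<sigma> where "\<sigma> = sign_pattern a (Suc k) x"
  define y where "y = layer W b d a x"
  define \<sigma>' where "\<sigma>' = sign_pattern (Suc a) k y"
  define J where "J = {j. j < d a \<and> aff W b d a x j = 0}"
  define Z' where "Z' = zero_nodes (Suc a) k y"
  define L where "L v = pattern_layer \<sigma> a v - pattern_layer \<sigma> a 0" for v
  have IH: "independent_functionals (vec (d a)) (preact_lin \<sigma>' (Suc a)) Z'"
    using Suc.IH[of "Suc a" y] Suc.prems(1) by (simp add: \<sigma>'_def Z'_def y_def vec_def layer_def aff_def)
  have J_indep: "independent_functionals (vec (d (a - 1))) (aff_lin a) J"
    using independent_functionals_aff_lin[OF gen Suc.prems(2) _ Suc.prems(3)] Suc.prems(1) by (simp add: J_def)
  show ?case
    unfolding independent_functionals_def \<sigma>_def[symmetric]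
  proof (intro allI impI)
    fix \<alpha> assume "\<forall>v\<in>vec (d (a - 1)). (\<Sum>l\<in>zero_nodes a (Suc k) x. \<alpha> l * preact_lin \<sigma> a l v) = 0"
    define \<psi> where "\<psi> w = (\<Sum>l\<in>Z'. \<alpha> l * preact_lin \<sigma>' (Suc a) l w)" for w
    have H: "\<forall>v\<in>vec (d (a - 1)). (\<Sum>j\<in>J. \<alpha> (a, j) * aff_lin a j v) + \<psi> (L v) = 0"
      using \<open>\<forall>v\<in>vec (d (a - 1)). _ = 0\<close> sum_zero_nodes_Suc
      by (simp add: \<sigma>_def \<sigma>'_def J_def Z'_def y_def L_def \<psi>_def)
    have "\<forall>l\<in>Z'. \<alpha> l = 0"
    proof (cases "Z' = {}")
      case False
      then have "a \<le> m"
        using Suc.prems(1) by (auto simp: Z'_def zero_nodes_def layer_nodes_def)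
      have "\<forall>z\<in>pattern_cell \<sigma> a 1. \<psi> (layer W b d a z - layer W b d a x) = 0"
      proof
        fix z assume z: "z \<in> pattern_cell \<sigma> a 1"
        then have "(\<Sum>j\<in>J. \<alpha> (a, j) * aff_lin a j (z - x)) + \<psi> (L (z - x)) = 0"
          using H first_layer_cell_diff(2)[OF _ Suc.prems(3)] by (simp add: \<sigma>_def)
        then show "\<psi> (layer W b d a z - layer W b d a x) = 0"
          using z first_layer_cell_diff(1,3)[OF _ Suc.prems(3)] by (simp add: \<sigma>_def J_def L_def)
      qed
      moreover have "\<forall>z\<in>pattern_cell \<sigma>' (Suc a) k. \<forall>w\<in>pattern_cell \<sigma>' (Suc a) k. \<psi> (z - w) = 0"
      proof (intro ballI)
        fix z w assume "z \<in> pattern_cell \<sigma>' (Suc a) k" "w \<in> pattern_cell \<sigma>' (Suc a) k"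
        then have "preact_lin \<sigma>' (Suc a) l (z - w) = 0" if "l \<in> Z'" for l
          using that preact_lin_eq_0_on_cell[of l "Suc a" k \<sigma>' z w] by (auto simp: Z'_def zero_nodes_def \<sigma>'_def)
        then show "\<psi> (z - w) = 0"
          by (simp add: \<psi>_def)
      qed
      ultimately have "\<forall>v\<in>vec (d a). \<psi> v = 0"
        using transversality_step[OF st Suc.prems(2) \<open>a \<le> m\<close> Suc.prems(1,3) linear_sum_preact_lin]
        by (simp add: \<sigma>_def \<sigma>'_def y_def \<psi>_def)
      then show ?thesis
        using IH unfolding independent_functionals_def \<psi>_def by blast
    qed simp
    then have "\<forall>v\<in>vec (d (a - 1)). (\<Sum>j\<in>J. \<alpha> (a, j) * aff_lin a j v) = 0"
      using H by (simp add: \<psi>_def)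
    then have "\<forall>j\<in>J. \<alpha> (a, j) = 0"
      using J_indep unfolding independent_functionals_def by (auto dest: spec[of _ "\<lambda>j. \<alpha> (a, j)"])
    with \<open>\<forall>l\<in>Z'. \<alpha> l = 0\<close> show "\<forall>l\<in>zero_nodes a (Suc k) x. \<alpha> l = 0"
      unfolding zero_nodes_Suc J_def[symmetric] y_def[symmetric] Z'_def[symmetric] by blast
  qed
qed

lemma adim_canon_cell:
  assumes gen: "generic W b d m" and st: "supertransversal W b d m"
    and E: "E \<in> canon W b d 1 (m + 1)" and x: "x \<in> rel_interior E"
  shows "adim E + card (zero_nodes 1 (m + 1) x) = d 0"
proof -
  let ?\<sigma> = "sign_pattern 1 (m + 1) x"
  let ?Z = "zero_nodes 1 (m + 1) x"
  let ?K = "{v \<in> vec (d 0). \<forall>l\<in>?Z. preact_lin ?\<sigma> 1 l v = 0}"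
  obtain c where E_eq: "E = pattern_cell c 1 (m + 1)"
    using E unfolding canon_eq_pattern_cells by blast
  then have "x \<in> vec (d 0)"
    using x rel_interior_subset pattern_cell_subset_vec by fastforce
  have "adim E = dim (span {p - q | p q. p \<in> E \<and> q \<in> E})"
    by (simp add: adim_def)
  also have "\<dots> = dim ?K"
    using span_diffs_pattern_cell[of x c 1 "m + 1"] x by (simp add: E_eq)
  finally have "adim E = dim ?K" .
  have "finite ?Z"
    using finite_layer_nodes by (simp add: zero_nodes_def)
  moreover have "independent_functionals (vec (d 0)) (preact_lin ?\<sigma> 1) ?Z"
    using independent_functionals_zero_nodes[OF gen st, of 1 "m + 1" x] \<open>x \<in> vec (d 0)\<close> by simp
  ultimately have "dim ?K + card ?Z = dim (vec (d 0))"
    using dim_common_kernel[OF subspace_vec equalityD1[OF vec_eq_span] finite_imageI[OF finite_lessThan]]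
      linear_preact_lin by blast
  then show ?thesis
    using \<open>adim E = dim ?K\<close> dim_vec by simp
qed

section \<open>Faces and the sign sequence cube complex\<close>

lemma pattern_cell_sign_pattern_subset_iff:
  assumes "x \<in> vec (d (a - 1))"
  shows "pattern_cell (sign_pattern a k x) a k \<subseteq> pattern_cell (sign_pattern a k y) a k \<longleftrightarrow>
    (\<forall>l\<in>layer_nodes a k. sign_pattern a k x l \<noteq> 0 \<longrightarrow> sign_pattern a k y l = sign_pattern a k x l)"
proof
  assume "pattern_cell (sign_pattern a k x) a k \<subseteq> pattern_cell (sign_pattern a k y) a k"
  then have "x \<in> pattern_cell (sign_pattern a k y) a k"
    using mem_pattern_cell_sign_pattern[OF assms] by blast
  then show "\<forall>l\<in>layer_nodes a k. sign_pattern a k x l \<noteq> 0 \<longrightarrow> sign_pattern a k y l = sign_pattern a k x l"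
    unfolding pattern_cell_def using has_weak_sign_eq_int_sgn by auto
next
  assume H: "\<forall>l\<in>layer_nodes a k. sign_pattern a k x l \<noteq> 0 \<longrightarrow> sign_pattern a k y l = sign_pattern a k x l"
  show "pattern_cell (sign_pattern a k x) a k \<subseteq> pattern_cell (sign_pattern a k y) a k"
  proof
    fix z assume z: "z \<in> pattern_cell (sign_pattern a k x) a k"
    have "has_weak_sign (sign_pattern a k y l) (preact a l z)" if l: "l \<in> layer_nodes a k" for l
    proof (cases "sign_pattern a k x l = 0")
      case True
      then have "preact a l z = 0"
        using z l unfolding pattern_cell_def has_weak_sign_def by fastforce
      then show ?thesis
        using sign_pattern_range by simp
    next
      case False
      then show ?thesis
        using z l H unfolding pattern_cell_def by fastforce
    qed
    then show "z \<in> pattern_cell (sign_pattern a k y) a k"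
      using z by (simp add: pattern_cell_def)
  qed
qed

lemma nodes_eq_layer_nodes: "nodes d m = layer_nodes 1 (m + 1)"
  by (auto simp: nodes_def layer_nodes_def)

lemma signseq_eq_sign_pattern:
  "signseq W b d m C = (\<lambda>l. real_of_int (sign_pattern 1 (m + 1) (SOME x. x \<in> rel_interior C) l))"
  by (auto simp: fun_eq_iff signseq_def sign_pattern_def nodes_eq_layer_nodes node_def preact_def
      of_int_int_sgn)

lemma signseq_range: "signseq W b d m E l \<in> {-1, 0, 1}"
  by (simp add: signseq_def sgn_if split: prod.split)

lemma canon_rel_interior_point:
  assumes "E \<in> canon W b d a k"
  defines "x \<equiv> SOME x. x \<in> rel_interior E"
  shows "x \<in> rel_interior E" "x \<in> vec (d (a - 1))" "pattern_cell (sign_pattern a k x) a k = E"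
proof -
  show x: "x \<in> rel_interior E"
    unfolding x_def using rel_interior_canon_nonempty[OF assms(1)] by (simp add: some_in_eq)
  obtain c where E: "E = pattern_cell c a k"
    using assms(1) unfolding canon_eq_pattern_cells by blast
  then show "x \<in> vec (d (a - 1))"
    using x rel_interior_subset pattern_cell_subset_vec by blast
  show "pattern_cell (sign_pattern a k x) a k = E"
    using pattern_cell_sign_pattern_rel_interior x by (simp add: E)
qed

lemma canon_subset_iff_signseq:
  assumes "C \<in> canon W b d 1 (m + 1)" "D \<in> canon W b d 1 (m + 1)"
  shows "C \<subseteq> D \<longleftrightarrow> (\<forall>l\<in>nodes d m. signseq W b d m C l \<noteq> 0 \<longrightarrow> signseq W b d m D l = signseq W b d m C l)"
  using pattern_cell_sign_pattern_subset_iff[OF canon_rel_interior_point(2)[OF assms(1)],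
      where y = "SOME x. x \<in> rel_interior D" and k = "m + 1"]
    canon_rel_interior_point(3)[OF assms(1)] canon_rel_interior_point(3)[OF assms(2)]
  by (simp add: signseq_eq_sign_pattern nodes_eq_layer_nodes del: sign_pattern_node)

lemma adim_plus_cube_dim:
  assumes "generic W b d m" "supertransversal W b d m" "E \<in> canon W b d 1 (m + 1)"
  shows "adim E + cube_dim (nodes d m) (signseq W b d m E) = d 0"
proof -
  let ?x = "SOME x. x \<in> rel_interior E"
  have "{l \<in> layer_nodes 1 (m + 1). sign_pattern 1 (m + 1) ?x l = 0} = zero_nodes 1 (m + 1) ?x"
    by (auto simp: zero_nodes_def)
  then have "cube_dim (nodes d m) (signseq W b d m E) = card (zero_nodes 1 (m + 1) ?x)"
    by (simp add: cube_dim_def signseq_eq_sign_pattern nodes_eq_layer_nodes del: sign_pattern_node)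
  then show ?thesis
    using adim_canon_cell[OF assms canon_rel_interior_point(1)[OF assms(3)]] by simp
qed

lemma finite_nodes: "finite (nodes d m)"
  by (simp add: nodes_eq_layer_nodes finite_layer_nodes)

lemma canon_subset_iff_cube_face:
  assumes "C \<in> canon W b d 1 (m + 1)" "D \<in> canon W b d 1 (m + 1)"
  shows "C \<subseteq> D \<longleftrightarrow> cube_face (nodes d m) (signseq W b d m D) \<subseteq> cube_face (nodes d m) (signseq W b d m C)"
proof -
  have "\<forall>l\<in>nodes d m. signseq W b d m D l \<in> {-1, 0, 1}"
    using signseq_range by blast
  then show ?thesis
    using canon_subset_iff_signseq[OF assms] by (simp only: cube_face_subset_iff)
qed

lemma canon_codim_one_iff_cube_face:
  assumes "generic W b d m" "supertransversal W b d m"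
    and "C \<in> canon W b d 1 (m + 1)" "D \<in> canon W b d 1 (m + 1)"
  shows "C \<subseteq> D \<and> adim C + 1 = adim D \<longleftrightarrow>
    cube_face (nodes d m) (signseq W b d m D) \<subseteq> cube_face (nodes d m) (signseq W b d m C) \<and>
    cube_dim (nodes d m) (signseq W b d m D) + 1 = cube_dim (nodes d m) (signseq W b d m C)"
proof -
  have "adim C + 1 = adim D \<longleftrightarrow>
      cube_dim (nodes d m) (signseq W b d m D) + 1 = cube_dim (nodes d m) (signseq W b d m C)"
    using adim_plus_cube_dim[OF assms(1,2,3)] adim_plus_cube_dim[OF assms(1,2,4)] by linarith
  then show ?thesis
    using canon_subset_iff_cube_face[OF assms(3,4)] by blast
qed

end

theorem lemma21:
  fixes W :: "nat \<Rightarrow> nat \<Rightarrow> nat \<Rightarrow> real" and b :: "nat \<Rightarrow> nat \<Rightarrow> real"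
    and d :: "nat \<Rightarrow> nat" and m :: nat
  defines "CF \<equiv> canon W b d 1 (m + 1)"
      and "s \<equiv> signseq W b d m"
      and "Q \<equiv> cube_face (nodes d m)"
  assumes m: "1 \<le> m"
    and widths: "\<forall>i\<le>m. 0 < d i" and out: "d (m + 1) = 1"
    and first: "d 0 \<le> d 1"
    and gen: "generic W b d m"
    and st: "supertransversal W b d m"
  shows "bij_betw (\<lambda>C. Q (s C)) CF ((\<lambda>C. Q (s C)) ` CF)
    \<and> (\<forall>C\<in>CF. \<forall>D\<in>CF. C \<subseteq> D \<longleftrightarrow> Q (s D) \<subseteq> Q (s C))
    \<and> (\<forall>C\<in>CF. \<forall>D\<in>CF.
         ((C \<subseteq> D \<and> adim C + 1 = adim D)
            \<longleftrightarrow> (\<exists>l\<in>nodes d m. s C l = 0 \<and> s D l \<in> {-1, 1}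
                   \<and> (\<forall>l'\<in>nodes d m. l' \<noteq> l \<longrightarrow> s D l' = s C l')))
       \<and> ((C \<subseteq> D \<and> adim C + 1 = adim D)
            \<longleftrightarrow> (Q (s D) \<subseteq> Q (s C)
                   \<and> cube_dim (nodes d m) (s D) + 1 = cube_dim (nodes d m) (s C))))"
proof -
  have faces: "C \<subseteq> D \<longleftrightarrow> Q (s D) \<subseteq> Q (s C)" if "C \<in> CF" "D \<in> CF" for C D
    using canon_subset_iff_cube_face that by (simp add: CF_def s_def Q_def)
  have codim_one: "C \<subseteq> D \<and> adim C + 1 = adim D \<longleftrightarrow>
      Q (s D) \<subseteq> Q (s C) \<and> cube_dim (nodes d m) (s D) + 1 = cube_dim (nodes d m) (s C)"
    if "C \<in> CF" "D \<in> CF" for C D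
    using canon_codim_one_iff_cube_face[OF gen st] that by (simp add: CF_def s_def Q_def)
  have flip: "Q (s D) \<subseteq> Q (s C) \<and> cube_dim (nodes d m) (s D) + 1 = cube_dim (nodes d m) (s C) \<longleftrightarrow>
      (\<exists>l\<in>nodes d m. s C l = 0 \<and> s D l \<in> {-1, 1} \<and> (\<forall>l'\<in>nodes d m. l' \<noteq> l \<longrightarrow> s D l' = s C l'))" for C D
    unfolding Q_def s_def using finite_nodes signseq_range by (intro cube_face_codim_one_iff) blast+
  have "inj_on (\<lambda>C. Q (s C)) CF"
    by (rule inj_onI) (use faces in blast)
  then show ?thesis
    using faces codim_one flip by (simp add: bij_betw_def)
qed

end
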